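(* Let $t_0>0$ and $u\in\mathrm{W}^{2,p}_0([0,t_0],\operatorname{rg}(P^e_-))$. Then the function $x:[0,t_0]\to X^e$, $x(t)(r):=\hat u(t-r)$ ($r\in\mathbb{R}_+$, $\hat u$ the extension of $u$ by $0$ to $\mathbb{R}$), is a classical solution of the boundary control system \[ \dot x(t)=A_m^e x(t),\quad L^e x(t)=u(t)\quad (0\le t\le t_0),\qquad x(0)=0. \]
   Context: Fix $p\in[1,\infty)$, $\ell\in\mathbb{N}$, $X^e=\mathrm{L}^p(\mathbb{R}_+,\mathbb{C}^\ell)$ with $\mathbb{R}_+=[0,\infty)$. $P^e_+,P^e_-\in\mathrm{M}_\ell(\mathbb{C})$ are complementary diagonal coordinate projections ($P^e_++P^e_-=\mathrm{Id}$). $A_m^e f=(P^e_+-P^e_-)f'$ with $D(A_m^e)=\mathrm{W}^{1,p}(\mathbb{R}_+,\mathbb{C}^\ell)$, and $L^e:D(A^e_m)\to\operatorname{rg}(P^e_-)$, $L^ef=P^e_-f(0)$. A classical solution is a function $x\in\mathrm{C}^1([0,t_0],X^e)$ with $x(t)\in D(A^e_m)$ for all $t$, $t\mapsto A^e_mx(t)$ continuous, satisfying the stated equations. *)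

theory Defs
  imports "HOL-Analysis.Analysis"
begin

definition Lp_integral :: "real \<Rightarrow> real set \<Rightarrow> (real \<Rightarrow> 'a::real_normed_vector) \<Rightarrow> ennreal" where
  "Lp_integral p I f = nn_integral (lebesgue_on I) (\<lambda>r. ennreal (norm (f r) powr p))"

definition memLp :: "real \<Rightarrow> real set \<Rightarrow> (real \<Rightarrow> 'a::{real_normed_vector,second_countable_topology}) \<Rightarrow> bool" where
  "memLp p I f \<longleftrightarrow> f \<in> borel_measurable (lebesgue_on I) \<and> Lp_integral p I f < \<infinity>"

definition Lp_norm :: "real \<Rightarrow> real set \<Rightarrow> (real \<Rightarrow> 'a::real_normed_vector) \<Rightarrow> real" where
  "Lp_norm p I f = (enn2real (Lp_integral p I f)) powr (1 / p)"

definition smooth_fun :: "(real \<Rightarrow> real) \<Rightarrow> bool" where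
  "smooth_fun \<phi> \<longleftrightarrow> (\<forall>n x. ((deriv ^^ n) \<phi>) differentiable (at x))"

definition test_fun :: "real set \<Rightarrow> (real \<Rightarrow> real) \<Rightarrow> bool" where
  "test_fun I \<phi> \<longleftrightarrow> smooth_fun \<phi> \<and> compact (closure {r. \<phi> r \<noteq> 0}) \<and> closure {r. \<phi> r \<noteq> 0} \<subseteq> I"

definition vec_test_fun :: "real set \<Rightarrow> (real \<Rightarrow> complex^'l::finite) \<Rightarrow> bool" where
  "vec_test_fun I \<psi> \<longleftrightarrow> (\<forall>i. test_fun I (\<lambda>r. Re (\<psi> r $ i)) \<and> test_fun I (\<lambda>r. Im (\<psi> r $ i)))"

definition weak_deriv_on :: "real set \<Rightarrow> (real \<Rightarrow> complex^'l::finite) \<Rightarrow> (real \<Rightarrow> complex^'l) \<Rightarrow> bool" where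
  "weak_deriv_on I f g \<longleftrightarrow>
     (\<forall>\<phi>. test_fun I \<phi> \<longrightarrow>
        integral\<^sup>L (lebesgue_on I) (\<lambda>r. deriv \<phi> r *\<^sub>R f r)
          = - integral\<^sup>L (lebesgue_on I) (\<lambda>r. \<phi> r *\<^sub>R g r))"

definition W1p :: "real \<Rightarrow> real set \<Rightarrow> (real \<Rightarrow> complex^'l::finite) \<Rightarrow> (real \<Rightarrow> complex^'l) \<Rightarrow> bool" where
  "W1p p I f f1 \<longleftrightarrow> memLp p I f \<and> memLp p I f1 \<and> weak_deriv_on I f f1"

definition W2p :: "real \<Rightarrow> real set \<Rightarrow> (real \<Rightarrow> complex^'l::finite) \<Rightarrow> (real \<Rightarrow> complex^'l)
    \<Rightarrow> (real \<Rightarrow> complex^'l) \<Rightarrow> bool" where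
  "W2p p I f f1 f2 \<longleftrightarrow> memLp p I f \<and> memLp p I f1 \<and> memLp p I f2
     \<and> weak_deriv_on I f f1 \<and> weak_deriv_on I f1 f2"

text \<open>W^{2,p}_0(I,V): W^{2,p}-functions with values (a.e.) in V which are W^{2,p}-norm limits
  of V-valued test functions (closure of C_c^infinity(I,V) in W^{2,p}).\<close>
definition W2p0 :: "real \<Rightarrow> real set \<Rightarrow> (complex^'l::finite) set \<Rightarrow> (real \<Rightarrow> complex^'l) \<Rightarrow> bool" where
  "W2p0 p I V u \<longleftrightarrow>
     (AE t in lebesgue_on I. u t \<in> V) \<and>
     (\<exists>u1 u2. W2p p I u u1 u2 \<and>
        (\<exists>\<psi> \<psi>1 \<psi>2 :: nat \<Rightarrow> real \<Rightarrow> complex^'l.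
           (\<forall>n. vec_test_fun I (\<psi> n) \<and> (\<forall>r. \<psi> n r \<in> V) \<and> W2p p I (\<psi> n) (\<psi>1 n) (\<psi>2 n)) \<and>
           (\<lambda>n. Lp_norm p I (\<lambda>r. \<psi> n r - u r) + Lp_norm p I (\<lambda>r. \<psi>1 n r - u1 r)
                 + Lp_norm p I (\<lambda>r. \<psi>2 n r - u2 r)) \<longlonglongrightarrow> 0))"

text \<open>Boundary value at 0 of a W^{1,p}(R_+) function: value at 0 of its continuous representative.\<close>
definition trace0 :: "(real \<Rightarrow> complex^'l::finite) \<Rightarrow> complex^'l" where
  "trace0 f = (THE c. \<exists>h. continuous_on {0..} h \<and> (AE r in lebesgue_on {0<..}. f r = h r) \<and> h 0 = c)"

definition rg :: "complex^'l^'l \<Rightarrow> (complex^'l::finite) set" where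
  "rg P = {v. P *v v = v}"

definition ext0 :: "real \<Rightarrow> (real \<Rightarrow> 'a::zero) \<Rightarrow> real \<Rightarrow> 'a" where
  "ext0 t0 u s = (if s \<in> {0..t0} then u s else 0)"

text \<open>Classical solution x in C^1([0,t0], X^e), X^e = L^p(R_+, C^l), of
  x' = A_m x, L x = u, x(0)=0, with A_m f = (P+ - P-) f', D(A_m) = W^{1,p}, L f = P- f(0).\<close>
definition classical_solution ::
  "real \<Rightarrow> complex^'l^'l \<Rightarrow> complex^'l^'l \<Rightarrow> real \<Rightarrow> (real \<Rightarrow> complex^'l::finite)
     \<Rightarrow> (real \<Rightarrow> real \<Rightarrow> complex^'l) \<Rightarrow> bool" where
  "classical_solution p Pp Pm t0 u x \<longleftrightarrow>
     (\<exists>x' g :: real \<Rightarrow> real \<Rightarrow> complex^'l.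
        \<comment> \<open>x is C^1 from [0,t0] into X^e with derivative x'\<close>
        (\<forall>t\<in>{0..t0}. memLp p {0<..} (x t) \<and> memLp p {0<..} (x' t)) \<and>
        (\<forall>t\<in>{0..t0}. ((\<lambda>s. Lp_norm p {0<..} (\<lambda>r. x s r - x t r - (s - t) *\<^sub>R x' t r) / \<bar>s - t\<bar>)
                          \<longlongrightarrow> 0) (at t within {0..t0})) \<and>
        (\<forall>t\<in>{0..t0}. ((\<lambda>s. Lp_norm p {0<..} (\<lambda>r. x' s r - x' t r)) \<longlongrightarrow> 0) (at t within {0..t0})) \<and>
        \<comment> \<open>x(t) \<in> D(A_m) with weak derivative g t\<close>
        (\<forall>t\<in>{0..t0}. W1p p {0<..} (x t) (g t)) \<and>
        \<comment> \<open>t \<mapsto> A_m x(t) continuous\<close>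
        (\<forall>t\<in>{0..t0}. ((\<lambda>s. Lp_norm p {0<..} (\<lambda>r. (Pp - Pm) *v g s r - (Pp - Pm) *v g t r))
                          \<longlongrightarrow> 0) (at t within {0..t0})) \<and>
        \<comment> \<open>equations\<close>
        (\<forall>t\<in>{0..t0}. AE r in lebesgue_on {0<..}. x' t r = (Pp - Pm) *v g t r) \<and>
        (\<forall>t\<in>{0..t0}. Pm *v trace0 (x t) = u t) \<and>
        (AE r in lebesgue_on {0<..}. x 0 r = 0))"

end

(* Let U be the extension of u by zero.  The candidate x(t)(r) = U(t - r) is a travelling
   wave, so everything reduces to the regularity of U.

   First, u is C^1 on [0, t0], and u and u' vanish at 0 and t0.  Take test functions psi_n
   converging to u in W^{2,p}.  Testing the weak derivatives against smooth plateau functions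
   (built from exp (-1/y)) that approximate the indicator of (0, t) gives
   psi_n'(t) = int_0^t psi_n''; hence psi_n' converges uniformly, psi_n converges uniformly to
   a C^1 function, and this limit agrees with the L^1-limit u.  So U is C^1 on the real line
   and vanishes outside [0, t0].

   Then t |-> U(t - .) is C^1 into L^p(0, oo) with derivative U'(t - .), by uniform continuity
   of U'; its weak space derivative is -U'(t - .); and since U' takes values in rg P-, as U
   does, (P+ - P-)(-U') = U'.  The boundary condition is U(t) = u(t). *)

theory Submission
  imports Defs
begin

section \<open>Smooth bump and plateau functions\<close>

definition deriv_closed :: "((real \<Rightarrow> real) \<Rightarrow> bool) \<Rightarrow> bool" where
  "deriv_closed P \<longleftrightarrow> (\<forall>f. P f \<longrightarrow> (\<exists>f'. (\<forall>x. (f has_real_derivative f' x) (at x)) \<and> P f'))"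

lemma smooth_fun_if_deriv_closed:
  assumes P: "deriv_closed P" and "P f"
  shows "smooth_fun f"
proof -
  have step: "(\<forall>x. (g has_real_derivative deriv g x) (at x)) \<and> P (deriv g)" if "P g" for g
  proof -
    obtain g' where g': "\<forall>x. (g has_real_derivative g' x) (at x)" "P g'"
      using P \<open>P g\<close> unfolding deriv_closed_def by blast
    moreover have "deriv g = g'"
      using g'(1) by (auto intro!: DERIV_imp_deriv)
    ultimately show ?thesis by simp
  qed
  have "P ((deriv ^^ n) f)" for n
    by (induction n) (use \<open>P f\<close> step in auto)
  then show ?thesis
    unfolding smooth_fun_def using step real_differentiable_def by blast
qed

lemma smooth_fun_has_deriv:
  assumes "smooth_fun f"
  shows "(f has_real_derivative deriv f x) (at x)"
  using assms[unfolded smooth_fun_def, rule_format, of 0 x]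
  by (simp add: DERIV_deriv_iff_real_differentiable)

lemma smooth_fun_deriv:
  assumes "smooth_fun f"
  shows "smooth_fun (deriv f)"
  using assms unfolding smooth_fun_def by (metis comp_apply funpow_Suc_right)

lemma deriv_closed_smooth_fun: "deriv_closed smooth_fun"
  unfolding deriv_closed_def using smooth_fun_has_deriv smooth_fun_deriv by blast

lemma smooth_fun_continuous_on: "smooth_fun f \<Longrightarrow> continuous_on A f"
  by (meson DERIV_isCont continuous_at_imp_continuous_on smooth_fun_has_deriv)

lemma smooth_fun_diff:
  assumes "smooth_fun f" "smooth_fun g"
  shows "smooth_fun (\<lambda>y. f y - g y)"
proof (rule smooth_fun_if_deriv_closed)
  let ?P = "\<lambda>h. \<exists>a b. smooth_fun a \<and> smooth_fun b \<and> h = (\<lambda>y. a y - b y)"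
  show "deriv_closed ?P"
    unfolding deriv_closed_def
  proof (intro allI impI)
    fix h assume "?P h"
    then obtain a b where ab: "smooth_fun a" "smooth_fun b" "h = (\<lambda>y. a y - b y)" by blast
    then show "\<exists>h'. (\<forall>x. (h has_real_derivative h' x) (at x)) \<and> ?P h'"
      by (intro exI[of _ "\<lambda>y. deriv a y - deriv b y"])
         (auto intro!: DERIV_diff smooth_fun_has_deriv smooth_fun_deriv)
  qed
qed (use assms in blast)

lemma smooth_fun_scaled_affine:
  assumes "smooth_fun f"
  shows "smooth_fun (\<lambda>y. c * f (\<alpha> * y + \<gamma>))"
proof (rule smooth_fun_if_deriv_closed)
  let ?P = "\<lambda>h. \<exists>a c. smooth_fun a \<and> h = (\<lambda>y. c * a (\<alpha> * y + \<gamma>))"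
  show "deriv_closed ?P"
    unfolding deriv_closed_def
  proof (intro allI impI)
    fix h assume "?P h"
    then obtain a c where a: "smooth_fun a" and h: "h = (\<lambda>y. c * a (\<alpha> * y + \<gamma>))" by blast
    have "(h has_real_derivative (c * \<alpha>) * deriv a (\<alpha> * x + \<gamma>)) (at x)" for x
      unfolding h
      by (rule DERIV_chain2[OF smooth_fun_has_deriv[OF a]] derivative_eq_intros refl | simp)+
    then show "\<exists>h'. (\<forall>x. (h has_real_derivative h' x) (at x)) \<and> ?P h'"
      using smooth_fun_deriv[OF a] by (intro exI[of _ "\<lambda>y. (c * \<alpha>) * deriv a (\<alpha> * y + \<gamma>)"]) blast
  qed
qed (use assms in blast)

lemma smooth_fun_antiderivative:
  assumes "smooth_fun f" and F: "\<And>x. (F has_real_derivative f x) (at x)"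
  shows "smooth_fun F"
proof (rule smooth_fun_if_deriv_closed)
  show "deriv_closed (\<lambda>h. smooth_fun h \<or> h = F)"
    using deriv_closed_smooth_fun assms unfolding deriv_closed_def by blast
qed simp

definition flat :: "nat \<Rightarrow> real \<Rightarrow> real" where
  "flat k y = (if 0 < y then inverse y ^ k * exp (- inverse y) else 0)"

lemma flat_tendsto_0: "(flat k \<longlongrightarrow> 0) (at 0)"
proof (rule filterlim_split_at)
  show "(flat k \<longlongrightarrow> 0) (at_left 0)"
    by (rule tendsto_eventually)
       (auto simp: flat_def eventually_at_left_field intro!: exI[of _ "-1"])
next
  have "((\<lambda>x. x ^ k / exp x) \<longlongrightarrow> (0::real)) at_top"
    by (rule tendsto_power_div_exp_0)
  then have "((\<lambda>x. inverse x ^ k / exp (inverse x)) \<longlongrightarrow> (0::real)) (at_right 0)"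
    using filterlim_compose[OF _ filterlim_inverse_at_top_right] by blast
  then show "(flat k \<longlongrightarrow> 0) (at_right 0)"
    by (rule Lim_transform_eventually)
       (auto simp: flat_def exp_minus field_simps eventually_at_right_field intro!: exI[of _ 1])
qed

lemma has_real_derivative_flat:
  "(flat k has_real_derivative (- real k * flat (k + 1) y + flat (k + 2) y)) (at y)"
proof (cases y "0 :: real" rule: linorder_cases)
  case less
  have "((\<lambda>_. 0) has_real_derivative (- real k * flat (k + 1) y + flat (k + 2) y)) (at y)"
    using less by (simp add: flat_def)
  then show ?thesis
    by (rule has_field_derivative_transform_within_open[of _ _ _ "{..<0}"])
       (use less in \<open>auto simp: flat_def\<close>)
next
  case equal
  have "(\<lambda>x. (flat k x - flat k 0) / (x - 0)) = flat (k + 1)"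
    by (auto simp: flat_def fun_eq_iff divide_inverse)
  moreover have "- real k * flat (k + 1) 0 + flat (k + 2) 0 = 0"
    by (simp add: flat_def)
  ultimately show ?thesis
    unfolding has_field_derivative_iff equal using flat_tendsto_0[of "k + 1"] by simp
next
  case greater
  have "((\<lambda>x. inverse x ^ k * exp (- inverse x)) has_real_derivative
      real k * inverse y ^ (k - 1) * (- (inverse y * inverse y)) * exp (- inverse y)
      + inverse y ^ k * (exp (- inverse y) * (inverse y * inverse y))) (at y)"
    using greater by (auto intro!: derivative_eq_intros)
  moreover have "real k * inverse y ^ (k - 1) * (- (inverse y * inverse y)) * exp (- inverse y)
      + inverse y ^ k * (exp (- inverse y) * (inverse y * inverse y))
      = - real k * flat (k + 1) y + flat (k + 2) y"
    using greater by (cases k) (auto simp: flat_def power2_eq_square algebra_simps)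
  ultimately have "((\<lambda>x. inverse x ^ k * exp (- inverse x)) has_real_derivative
      - real k * flat (k + 1) y + flat (k + 2) y) (at y)"
    by simp
  then show ?thesis
    by (rule has_field_derivative_transform_within_open[of _ _ _ "{0<..}"])
       (use greater in \<open>auto simp: flat_def\<close>)
qed

inductive flat_products :: "(real \<Rightarrow> real) \<Rightarrow> bool" where
  "flat_products (\<lambda>y. flat j y * flat k (1 - y))"
| "flat_products f \<Longrightarrow> flat_products g \<Longrightarrow> flat_products (\<lambda>y. f y + g y)"
| "flat_products f \<Longrightarrow> flat_products (\<lambda>y. c * f y)"

lemma flat_products_has_derivative:
  "flat_products f \<Longrightarrow> \<exists>f'. (\<forall>x. (f has_real_derivative f' x) (at x)) \<and> flat_products f'"
proof (induction rule: flat_products.induct)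
  case (1 j k)
  let ?f' = "\<lambda>y. (- real j * flat (j + 1) y + flat (j + 2) y) * flat k (1 - y)
      + flat j y * ((- real k * flat (k + 1) (1 - y) + flat (k + 2) (1 - y)) * (-1))"
  have "((\<lambda>y. flat j y * flat k (1 - y)) has_real_derivative ?f' x) (at x)" for x
  proof -
    have "((\<lambda>y. flat k (1 - y)) has_real_derivative
        (- real k * flat (k + 1) (1 - x) + flat (k + 2) (1 - x)) * (-1)) (at x)"
      by (rule DERIV_chain2[OF has_real_derivative_flat]) (auto intro!: derivative_eq_intros)
    then show ?thesis
      by (rule DERIV_cong[OF DERIV_mult[OF has_real_derivative_flat]]) (simp add: algebra_simps)
  qed
  moreover have e: "?f' = (\<lambda>y. ((- real j) * (flat (j + 1) y * flat k (1 - y))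
      + flat (j + 2) y * flat k (1 - y))
      + (real k * (flat j y * flat (k + 1) (1 - y)) + (-1) * (flat j y * flat (k + 2) (1 - y))))"
    by (auto simp: fun_eq_iff algebra_simps)
  then have "flat_products ?f'"
    unfolding e by (intro flat_products.intros)
  ultimately show ?case
    by (intro exI[of _ ?f']) blast
next
  case (2 f g)
  then obtain f' g' where f': "\<And>x. (f has_real_derivative f' x) (at x)" "flat_products f'"
    and g': "\<And>x. (g has_real_derivative g' x) (at x)" "flat_products g'"
    by blast
  have "((\<lambda>y. f y + g y) has_real_derivative f' x + g' x) (at x)" for x
    by (rule DERIV_add[OF f'(1) g'(1)])
  moreover have "flat_products (\<lambda>x. f' x + g' x)"
    by (rule flat_products.intros(2)[OF f'(2) g'(2)])
  ultimately show ?case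
    by (intro exI[of _ "\<lambda>x. f' x + g' x"]) blast
next
  case (3 f c)
  then obtain f' where f': "\<And>x. (f has_real_derivative f' x) (at x)" "flat_products f'"
    by blast
  have "((\<lambda>y. c * f y) has_real_derivative c * f' x) (at x)" for x
    by (rule DERIV_cmult[OF f'(1)])
  moreover have "flat_products (\<lambda>x. c * f' x)"
    by (rule flat_products.intros(3)[OF f'(2)])
  ultimately show ?case
    by (intro exI[of _ "\<lambda>x. c * f' x"]) blast
qed

lemma deriv_closed_flat_products: "deriv_closed flat_products"
  unfolding deriv_closed_def by (intro allI impI flat_products_has_derivative)

definition bump :: "real \<Rightarrow> real" where
  "bump y = flat 0 y * flat 0 (1 - y)"

lemma smooth_fun_bump: "smooth_fun bump"
proof (rule smooth_fun_if_deriv_closed[OF deriv_closed_flat_products])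
  show "flat_products bump"
    unfolding bump_def[abs_def] by (rule flat_products.intros(1))
qed

lemma bump_nonneg: "0 \<le> bump y"
  by (simp add: bump_def flat_def)

lemma bump_eq_0: "y \<le> 0 \<or> 1 \<le> y \<Longrightarrow> bump y = 0"
  by (auto simp: bump_def flat_def)

lemma bump_lower_bound:
  assumes "1/4 \<le> y" "y \<le> 3/4"
  shows "exp (-8) \<le> bump y"
proof -
  have "inverse y \<le> inverse (1/4)" "inverse (1 - y) \<le> inverse (1/4)"
    by (rule le_imp_inverse_le; use assms in simp)+
  then have "exp (-4) \<le> exp (- inverse y)" "exp (-4) \<le> exp (- inverse (1 - y))"
    by simp_all
  then have "exp (-4) * exp (-4) \<le> exp (- inverse y) * exp (- inverse (1 - y))"
    by (intro mult_mono) auto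
  moreover have "exp (-8::real) = exp (-4) * exp (-4)"
    by (simp flip: exp_add)
  ultimately show ?thesis
    using assms by (simp add: bump_def flat_def)
qed

lemma bump_integrable_on: "bump integrable_on {a..b}"
  by (rule integrable_continuous_interval, rule smooth_fun_continuous_on[OF smooth_fun_bump])

lemma integral_bump_pos: "0 < integral {-1..1} bump"
proof -
  have "integral {1/4..3/4::real} (\<lambda>_. exp (-8::real)) \<le> integral {1/4..3/4} bump"
    by (rule integral_le) (auto intro: bump_integrable_on bump_lower_bound)
  also have "\<dots> \<le> integral {-1..1} bump"
    by (rule integral_subset_le) (auto intro: bump_integrable_on bump_nonneg)
  finally have "exp (-8) / 2 \<le> integral {-1..1} bump"
    by simp
  moreover have "0 < exp (-8::real) / 2"
    by simp
  ultimately show ?thesis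
    by linarith
qed

definition smooth_step :: "real \<Rightarrow> real" where
  "smooth_step y = integral {-1..y} bump / integral {-1..1} bump"

lemma smooth_step_eq_0: "y \<le> 0 \<Longrightarrow> smooth_step y = 0"
proof -
  assume "y \<le> 0"
  then have "integral {-1..y} bump = integral {-1..y} (\<lambda>_. 0::real)"
    by (intro integral_cong) (auto intro: bump_eq_0)
  then show ?thesis by (simp add: smooth_step_def)
qed

lemma smooth_step_eq_1: "1 \<le> y \<Longrightarrow> smooth_step y = 1"
proof -
  assume y: "1 \<le> y"
  have "integral {-1..1} bump + integral {1..y} bump = integral {-1..y} bump"
    using Henstock_Kurzweil_Integration.integral_combine[where a="-1" and c=1 and b=y and f=bump]
      y bump_integrable_on by simp
  moreover have "integral {1..y} bump = integral {1..y} (\<lambda>_. 0::real)"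
    by (intro integral_cong) (auto intro: bump_eq_0)
  ultimately show ?thesis
    using integral_bump_pos by (simp add: smooth_step_def)
qed

lemma smooth_step_bounds: "0 \<le> smooth_step y \<and> smooth_step y \<le> 1"
proof (cases "y \<le> 1")
  case True
  have "0 \<le> integral {-1..y} bump"
    by (rule integral_nonneg) (auto intro: bump_integrable_on bump_nonneg)
  moreover have "integral {-1..y} bump \<le> integral {-1..1} bump"
  proof (cases "-1 \<le> y")
    case True
    then show ?thesis
      by (intro integral_subset_le) (use \<open>y \<le> 1\<close> in \<open>auto intro: bump_integrable_on bump_nonneg\<close>)
  next
    case False
    then show ?thesis using integral_bump_pos by simp
  qed
  ultimately show ?thesis
    using integral_bump_pos by (simp add: smooth_step_def field_simps)
qed (simp add: smooth_step_eq_1)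

lemma has_real_derivative_smooth_step:
  "(smooth_step has_real_derivative bump x / integral {-1..1} bump) (at x)"
proof (cases "x < 0")
  case True
  have "((\<lambda>_. 0) has_real_derivative bump x / integral {-1..1} bump) (at x)"
    using True bump_eq_0[of x] by simp
  then show ?thesis
    by (rule has_field_derivative_transform_within_open[of _ _ _ "{..<0}"])
       (use True in \<open>auto simp: smooth_step_eq_0\<close>)
next
  case False
  have "((\<lambda>y. integral {-1..y} bump) has_vector_derivative bump x) (at x within {-1..x+1})"
    by (rule integral_has_vector_derivative)
       (use False smooth_fun_continuous_on[OF smooth_fun_bump] in auto)
  moreover have "at x within {-1..x+1} = at x"
    by (rule at_within_interior) (use False in auto)
  ultimately show ?thesis
    unfolding smooth_step_def[abs_def]
    by (intro DERIV_cdivide) (simp add: has_real_derivative_iff_has_vector_derivative)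
qed

lemma smooth_fun_smooth_step: "smooth_fun smooth_step"
  using smooth_fun_antiderivative[OF _ has_real_derivative_smooth_step]
    smooth_fun_scaled_affine[OF smooth_fun_bump, of "inverse (integral {-1..1} bump)" 1 0]
  by (simp add: field_simps)

text \<open>A smooth approximation of the indicator of \<open>(0, x)\<close>: it vanishes outside
  \<open>(1/k, x - 1/k)\<close> and equals 1 on \<open>[2/k, x - 2/k]\<close>.\<close>
definition plateau :: "real \<Rightarrow> real \<Rightarrow> real \<Rightarrow> real" where
  "plateau k x y = smooth_step (k * y - 1) - smooth_step (k * y + (2 - k * x))"

lemma smooth_fun_plateau: "smooth_fun (plateau k x)"
  using smooth_fun_diff[OF smooth_fun_scaled_affine[OF smooth_fun_smooth_step, of 1 k "-1"]
      smooth_fun_scaled_affine[OF smooth_fun_smooth_step, of 1 k "2 - k * x"]]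
  by (simp add: plateau_def[abs_def])

lemma abs_plateau_le_1: "\<bar>plateau k x y\<bar> \<le> 1"
  using smooth_step_bounds[of "k * y - 1"] smooth_step_bounds[of "k * y + (2 - k * x)"]
  unfolding plateau_def by linarith

lemma plateau_eq_0:
  assumes "0 < k" "3 < k * x" and y: "y < 1/k \<or> x - 1/k < y"
  shows "plateau k x y = 0"
  using y
proof
  assume "y < 1/k"
  then have "k * y < 1" using assms(1) by (simp add: field_simps)
  then show ?thesis
    using assms(2) by (simp add: plateau_def smooth_step_eq_0)
next
  assume "x - 1/k < y"
  then have "k * x - 1 < k * y" using assms(1) by (simp add: field_simps)
  then show ?thesis
    using assms(2) by (simp add: plateau_def smooth_step_eq_1)
qed

lemma test_fun_eq_0:
  assumes "test_fun I \<phi>" "y \<notin> I"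
  shows "\<phi> y = 0"
  using assms closure_subset[of "{r. \<phi> r \<noteq> 0}"] unfolding test_fun_def by blast

lemma test_fun_deriv:
  assumes "test_fun I \<phi>"
  shows "test_fun I (deriv \<phi>)"
proof -
  let ?S = "closure {r. \<phi> r \<noteq> 0}"
  have "deriv \<phi> y = 0" if "y \<notin> ?S" for y
  proof -
    have "(\<phi> has_real_derivative 0) (at y)"
      by (rule has_field_derivative_transform_within_open[of "\<lambda>_. 0" _ _ "- ?S"])
         (use that closure_subset[of "{r. \<phi> r \<noteq> 0}"] in auto)
    then show ?thesis by (rule DERIV_imp_deriv)
  qed
  then have "closure {r. deriv \<phi> r \<noteq> 0} \<subseteq> ?S"
    by (intro closure_minimal) auto
  moreover have "compact ?S" "?S \<subseteq> I" "smooth_fun \<phi>"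
    using assms unfolding test_fun_def by auto
  ultimately show ?thesis
    unfolding test_fun_def
    by (metis bounded_subset closed_closure compact_eq_bounded_closed order_trans smooth_fun_deriv)
qed

lemma test_fun_plateau:
  assumes "0 < x" "x \<le> t0" "0 < k" "3 < k * x"
  shows "test_fun {0<..<t0} (plateau k x)"
proof -
  have "y \<in> {1/k..x - 1/k}" if "plateau k x y \<noteq> 0" for y
    using plateau_eq_0[OF assms(3,4), of y] that by fastforce
  then have "closure {y. plateau k x y \<noteq> 0} \<subseteq> {1/k..x - 1/k}"
    by (intro closure_minimal) auto
  moreover have "{1/k..x - 1/k} \<subseteq> {0<..<t0}"
  proof
    fix y assume "y \<in> {1/k..x - 1/k}"
    moreover have "0 < 1/k"
      using assms(3) by simp
    ultimately show "y \<in> {0<..<t0}"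
      using assms(2) by (simp only: atLeastAtMost_iff greaterThanLessThan_iff) linarith
  qed
  ultimately show ?thesis
    unfolding test_fun_def using smooth_fun_plateau
    by (metis bounded_closed_interval bounded_subset closed_closure compact_eq_bounded_closed
        order_trans)
qed

lemma plateau_tendsto_indicator:
  assumes x: "0 < x"
  shows "(\<lambda>k. plateau (real k) x y) \<longlonglongrightarrow> indicator {0<..<x} y"
proof (rule tendsto_eventually)
  obtain N :: nat where N: "2/x + 2/\<bar>y\<bar> + 2/\<bar>x - y\<bar> < real N"
    using reals_Archimedean2 by blast
  have "plateau (real k) x y = indicator {0<..<x} y" if "N \<le> k" for k
  proof -
    have "0 \<le> 2/\<bar>y\<bar>" "0 \<le> 2/\<bar>x - y\<bar>" "0 < 2/x" "real N \<le> real k"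
      using x that by auto
    then have k: "2/x < real k" "2/\<bar>y\<bar> \<le> real k" "2/\<bar>x - y\<bar> \<le> real k"
      using N by linarith+
    then have kx: "2 < real k * x"
      using x by (simp add: field_simps)
    consider "y \<le> 0" | "0 < y" "y < x" | "x \<le> y"
      by linarith
    then show ?thesis
    proof cases
      case 1
      then have "real k * y \<le> 0"
        by (simp add: mult_nonneg_nonpos)
      then show ?thesis
        using 1 kx by (simp add: plateau_def smooth_step_eq_0)
    next
      case 2
      then have "2 \<le> real k * y" "2 \<le> real k * (x - y)"
        using k by (simp_all add: field_simps)
      then show ?thesis
        using 2 by (simp add: plateau_def smooth_step_eq_0 smooth_step_eq_1 algebra_simps)
    next
      case 3
      then have "real k * x \<le> real k * y"
        by (simp add: mult_left_mono)
      then show ?thesis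
        using 3 kx by (simp add: plateau_def smooth_step_eq_1)
    qed
  qed
  then show "\<forall>\<^sub>F k in sequentially. plateau (real k) x y = indicator {0<..<x} y"
    unfolding eventually_sequentially by blast
qed

section \<open>Lebesgue integrals over intervals\<close>

lemma
  fixes F :: "real \<Rightarrow> 'a::euclidean_space"
  assumes "continuous_on {a..b} F"
  shows continuous_imp_integrable_Ioo: "integrable (lebesgue_on {a<..<b}) F"
    and continuous_imp_integral_Ioo_eq: "integral\<^sup>L (lebesgue_on {a<..<b}) F = integral {a..b} F"
proof -
  have "F absolutely_integrable_on {a<..<b}"
    using absolutely_integrable_continuous_real[OF assms] by (rule set_integrable_subset) auto
  then show integrable: "integrable (lebesgue_on {a<..<b}) F"
    by (rule absolutely_integrable_imp_integrable) auto
  have "(F has_integral integral\<^sup>L (lebesgue_on {a<..<b}) F) {a<..<b}"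
    by (rule has_integral_integral_lebesgue_on[OF integrable]) auto
  then show "integral\<^sup>L (lebesgue_on {a<..<b}) F = integral {a..b} F"
    using integral_open_interval_real[of a b F] by (simp add: integral_unique)
qed

lemma integral_lebesgue_on_indicator:
  fixes g :: "real \<Rightarrow> 'a::{banach, second_countable_topology}"
  assumes "S \<subseteq> T" "S \<in> sets lebesgue" "T \<in> sets lebesgue"
  shows "integral\<^sup>L (lebesgue_on T) (\<lambda>y. indicator S y *\<^sub>R g y) = integral\<^sup>L (lebesgue_on S) g"
proof -
  have "integral\<^sup>L (lebesgue_on T) (\<lambda>y. indicator S y *\<^sub>R g y)
      = integral\<^sup>L lebesgue (\<lambda>y. indicator T y *\<^sub>R (indicator S y *\<^sub>R g y))"
    by (rule integral_restrict_space) (use assms in auto)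
  also have "\<dots> = integral\<^sup>L lebesgue (\<lambda>y. indicator S y *\<^sub>R g y)"
    by (rule Bochner_Integration.integral_cong) (use assms in \<open>auto split: split_indicator\<close>)
  also have "\<dots> = integral\<^sup>L (lebesgue_on S) g"
    by (rule integral_restrict_space[symmetric]) (use assms in auto)
  finally show ?thesis .
qed

lemma continuous_on_AE_eq_0:
  fixes h :: "real \<Rightarrow> 'a::real_normed_vector"
  assumes "a < b" and h: "continuous_on {a..b} h"
    and "AE y in lebesgue_on {a<..<b}. h y = 0" and "y \<in> {a..b}"
  shows "h y = 0"
proof -
  let ?U = "{a<..<b} \<inter> h -` (- {0})"
  have "AE y in lebesgue. y \<in> {a<..<b} \<longrightarrow> h y = 0"
    using assms(3) by (subst (asm) AE_restrict_space_iff) auto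
  then obtain N where N: "{y \<in> space lebesgue. \<not> (y \<in> {a<..<b} \<longrightarrow> h y = 0)} \<subseteq> N"
      "N \<in> null_sets lebesgue"
    by (rule AE_E) (simp add: null_sets_def)
  have "negligible N"
    using N(2) by (simp add: negligible_iff_null_sets)
  moreover have "?U \<subseteq> N"
    using N(1) by auto
  ultimately have "negligible ?U"
    using negligible_subset by blast
  moreover have "continuous_on {a<..<b} h"
    by (rule continuous_on_subset[OF h]) auto
  then have "open ?U"
    by (intro continuous_open_preimage) auto
  ultimately have "\<forall>y\<in>{a<..<b}. h y = 0"
    using open_not_negligible by blast
  moreover have "closed {y \<in> {a..b}. h y = 0}"
    by (rule continuous_closed_preimage_constant[OF h]) auto
  ultimately have "closure {a<..<b} \<subseteq> {y \<in> {a..b}. h y = 0}"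
    by (intro closure_minimal) auto
  then show ?thesis
    using assms(1,4) by auto
qed

lemma integration_by_parts_lebesgue_on_Ioo:
  fixes \<phi> \<phi>' :: "real \<Rightarrow> real" and v V :: "real \<Rightarrow> 'a::euclidean_space"
  assumes "a \<le> b"
    and \<phi>: "\<And>x. x \<in> {a..b} \<Longrightarrow> (\<phi> has_real_derivative \<phi>' x) (at x)"
    and v: "\<And>x. x \<in> {a..b} \<Longrightarrow> (v has_vector_derivative V x) (at x)"
    and "continuous_on {a..b} \<phi>'" "continuous_on {a..b} V" and "\<phi> a = 0" "\<phi> b = 0"
  shows "integral\<^sup>L (lebesgue_on {a<..<b}) (\<lambda>r. \<phi>' r *\<^sub>R v r)
    = - integral\<^sup>L (lebesgue_on {a<..<b}) (\<lambda>r. \<phi> r *\<^sub>R V r)"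
proof -
  have "continuous_on {a..b} \<phi>"
    by (rule continuous_at_imp_continuous_on) (use \<phi> DERIV_isCont in blast)
  moreover have "continuous_on {a..b} v"
    by (rule continuous_at_imp_continuous_on) (use v has_vector_derivative_continuous in blast)
  ultimately have cont: "continuous_on {a..b} (\<lambda>r. \<phi>' r *\<^sub>R v r)"
    "continuous_on {a..b} (\<lambda>r. \<phi> r *\<^sub>R V r)"
    using assms(4,5) by (auto intro: continuous_intros)
  have "((\<lambda>r. \<phi>' r *\<^sub>R v r) has_integral - integral {a..b} (\<lambda>r. \<phi> r *\<^sub>R V r)) {a..b}"
  proof (rule integration_by_parts[OF bounded_bilinear_scaleR \<open>a \<le> b\<close>,
        where f = \<phi> and g = v and f' = \<phi>' and g' = V])
    show "((\<lambda>r. \<phi> r *\<^sub>R V r) has_integral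
        \<phi> b *\<^sub>R v b - \<phi> a *\<^sub>R v a - - integral {a..b} (\<lambda>r. \<phi> r *\<^sub>R V r)) {a..b}"
      using integrable_continuous_interval[OF cont(2)] assms(6,7) by (simp add: integrable_integral)
  qed (use \<phi> v \<open>continuous_on {a..b} \<phi>\<close> \<open>continuous_on {a..b} v\<close>
        in \<open>auto simp: has_real_derivative_iff_has_vector_derivative\<close>)
  then show ?thesis
    using cont by (simp add: continuous_imp_integral_Ioo_eq integral_unique)
qed

section \<open>Regularity of limits of test functions\<close>

definition real_weak_deriv_on :: "real set \<Rightarrow> (real \<Rightarrow> real) \<Rightarrow> (real \<Rightarrow> real) \<Rightarrow> bool" where
  "real_weak_deriv_on I f g \<longleftrightarrow>
     (\<forall>\<phi>. test_fun I \<phi> \<longrightarrow>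
        integral\<^sup>L (lebesgue_on I) (\<lambda>r. deriv \<phi> r * f r)
          = - integral\<^sup>L (lebesgue_on I) (\<lambda>r. \<phi> r * g r))"

lemma real_weak_deriv_on_deriv:
  assumes "a \<le> b" and f: "smooth_fun f"
  shows "real_weak_deriv_on {a<..<b} f (deriv f)"
  unfolding real_weak_deriv_on_def
proof (intro allI impI)
  fix \<phi> assume \<phi>: "test_fun {a<..<b} \<phi>"
  then have "smooth_fun \<phi>"
    by (simp add: test_fun_def)
  have "integral\<^sup>L (lebesgue_on {a<..<b}) (\<lambda>r. deriv \<phi> r *\<^sub>R f r)
      = - integral\<^sup>L (lebesgue_on {a<..<b}) (\<lambda>r. \<phi> r *\<^sub>R deriv f r)"
  proof (rule integration_by_parts_lebesgue_on_Ioo[OF \<open>a \<le> b\<close>])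
    show "(f has_vector_derivative deriv f x) (at x)" for x
      using smooth_fun_has_deriv[OF f] by (simp add: has_real_derivative_iff_has_vector_derivative)
  qed (use \<phi> f \<open>smooth_fun \<phi>\<close> in \<open>auto intro: smooth_fun_has_deriv smooth_fun_continuous_on
        smooth_fun_deriv test_fun_eq_0\<close>)
  then show "integral\<^sup>L (lebesgue_on {a<..<b}) (\<lambda>r. deriv \<phi> r * f r)
      = - integral\<^sup>L (lebesgue_on {a<..<b}) (\<lambda>r. \<phi> r * deriv f r)"
    by simp
qed

lemma integral_second_deriv_eq_weak:
  assumes "a \<le> b" "smooth_fun f"
    and f1: "real_weak_deriv_on {a<..<b} f f1" and f2: "real_weak_deriv_on {a<..<b} f1 f2"
    and \<phi>: "test_fun {a<..<b} \<phi>"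
  shows "integral\<^sup>L (lebesgue_on {a<..<b}) (\<lambda>r. \<phi> r * deriv (deriv f) r)
    = integral\<^sup>L (lebesgue_on {a<..<b}) (\<lambda>r. \<phi> r * f2 r)"
proof -
  let ?I = "\<lambda>g. integral\<^sup>L (lebesgue_on {a<..<b}) g"
  have \<phi>': "test_fun {a<..<b} (deriv \<phi>)"
    by (rule test_fun_deriv[OF \<phi>])
  have f': "real_weak_deriv_on {a<..<b} f (deriv f)"
    and f'': "real_weak_deriv_on {a<..<b} (deriv f) (deriv (deriv f))"
    using assms(1,2) by (simp_all add: real_weak_deriv_on_deriv smooth_fun_deriv)
  have "?I (\<lambda>r. \<phi> r * f2 r) = - ?I (\<lambda>r. deriv \<phi> r * f1 r)"
    using f2 \<phi> by (simp add: real_weak_deriv_on_def)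
  also have "?I (\<lambda>r. deriv \<phi> r * f1 r) = - ?I (\<lambda>r. deriv (deriv \<phi>) r * f r)"
    using f1 \<phi>' by (simp add: real_weak_deriv_on_def)
  also have "?I (\<lambda>r. deriv (deriv \<phi>) r * f r) = - ?I (\<lambda>r. deriv \<phi> r * deriv f r)"
    using f' \<phi>' by (simp add: real_weak_deriv_on_def)
  also have "?I (\<lambda>r. deriv \<phi> r * deriv f r) = - ?I (\<lambda>r. \<phi> r * deriv (deriv f) r)"
    using f'' \<phi> by (simp add: real_weak_deriv_on_def)
  finally show ?thesis
    by simp
qed

lemma tendsto_integral_plateau:
  fixes g :: "real \<Rightarrow> real"
  assumes g: "integrable (lebesgue_on {0<..<t0}) g" and "0 < x"
  shows "(\<lambda>k. integral\<^sup>L (lebesgue_on {0<..<t0}) (\<lambda>y. plateau (real k) x y * g y))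
    \<longlonglongrightarrow> integral\<^sup>L (lebesgue_on {0<..<t0}) (\<lambda>y. indicator {0<..<x} y * g y)"
proof (rule integral_dominated_convergence[where w = "\<lambda>y. norm (g y)"])
  let ?M = "lebesgue_on {0<..<t0}"
  have g_meas: "g \<in> borel_measurable ?M"
    using g by (rule borel_measurable_integrable)
  show "(\<lambda>y. indicator {0<..<x} y * g y) \<in> borel_measurable ?M"
    using g_meas by (intro borel_measurable_times)
      (auto simp: borel_measurable_indicator_iff sets_restrict_space_iff)
  have "plateau (real k) x \<in> borel_measurable ?M" for k
    by (rule continuous_imp_measurable_on_sets_lebesgue
        [OF smooth_fun_continuous_on[OF smooth_fun_plateau]]) auto
  then show "(\<lambda>y. plateau (real k) x y * g y) \<in> borel_measurable ?M" for k
    using g_meas by (rule borel_measurable_times)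
  show "integrable ?M (\<lambda>y. norm (g y))"
    using g by (rule integrable_norm)
  show "AE y in ?M. (\<lambda>k. plateau (real k) x y * g y) \<longlonglongrightarrow> indicator {0<..<x} y * g y"
    using \<open>0 < x\<close> by (intro AE_I2 tendsto_mult_right plateau_tendsto_indicator)
  show "AE y in ?M. norm (plateau (real k) x y * g y) \<le> norm (g y)" for k
    using abs_plateau_le_1[of "real k" x] by (intro AE_I2) (simp add: abs_mult mult_left_le_one_le)
qed

lemma integral_indicator_eq_if_test_integrals_eq:
  fixes g h :: "real \<Rightarrow> real"
  assumes g: "integrable (lebesgue_on {0<..<t0}) g" and h: "integrable (lebesgue_on {0<..<t0}) h"
    and gh: "\<And>\<phi>. test_fun {0<..<t0} \<phi> \<Longrightarrow>
      integral\<^sup>L (lebesgue_on {0<..<t0}) (\<lambda>y. \<phi> y * g y)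
        = integral\<^sup>L (lebesgue_on {0<..<t0}) (\<lambda>y. \<phi> y * h y)"
    and x: "x \<in> {0..t0}"
  shows "integral\<^sup>L (lebesgue_on {0<..<t0}) (\<lambda>y. indicator {0<..<x} y * g y)
    = integral\<^sup>L (lebesgue_on {0<..<t0}) (\<lambda>y. indicator {0<..<x} y * h y)"
proof (cases "x = 0")
  case False
  with x have "0 < x" by simp
  obtain N :: nat where N: "3 / x < real N"
    using reals_Archimedean2 by blast
  have "integral\<^sup>L (lebesgue_on {0<..<t0}) (\<lambda>y. plateau (real k) x y * h y)
      = integral\<^sup>L (lebesgue_on {0<..<t0}) (\<lambda>y. plateau (real k) x y * g y)" if "N \<le> k" for k
  proof -
    have "3 / x < real k"
      using N that by linarith
    moreover have "0 < 3 / x"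
      using \<open>0 < x\<close> by simp
    ultimately have k: "0 < real k" "3 < real k * x"
      using \<open>0 < x\<close> by (linarith, simp add: pos_divide_less_eq)
    have "test_fun {0<..<t0} (plateau (real k) x)"
      using x by (intro test_fun_plateau[OF \<open>0 < x\<close> _ k]) auto
    then show ?thesis
      by (rule gh[symmetric])
  qed
  then have "\<forall>\<^sub>F k in sequentially.
      integral\<^sup>L (lebesgue_on {0<..<t0}) (\<lambda>y. plateau (real k) x y * h y)
      = integral\<^sup>L (lebesgue_on {0<..<t0}) (\<lambda>y. plateau (real k) x y * g y)"
    unfolding eventually_sequentially by blast
  from Lim_transform_eventually[OF tendsto_integral_plateau[OF h \<open>0 < x\<close>] this]
  show ?thesis
    using LIMSEQ_unique[OF tendsto_integral_plateau[OF g \<open>0 < x\<close>]] by simp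
qed simp

lemma deriv_test_fun_eq_integral:
  assumes f: "test_fun {0<..<t0} f"
    and f1: "real_weak_deriv_on {0<..<t0} f f1" and f2: "real_weak_deriv_on {0<..<t0} f1 f2"
    and "integrable (lebesgue_on {0<..<t0}) f2" and x: "x \<in> {0..t0}"
  shows "deriv f x = integral\<^sup>L (lebesgue_on {0<..<t0}) (\<lambda>y. indicator {0<..<x} y * f2 y)"
proof -
  let ?D = "deriv f" and ?DD = "deriv (deriv f)"
  have "smooth_fun f" "test_fun {0<..<t0} ?D"
    using f test_fun_deriv by (auto simp: test_fun_def)
  then have D: "smooth_fun ?D" "?D 0 = 0" "\<And>A. continuous_on A ?DD"
    by (auto simp: smooth_fun_deriv smooth_fun_continuous_on test_fun_eq_0)
  have "integral\<^sup>L (lebesgue_on {0<..<t0}) (\<lambda>y. indicator {0<..<x} y * f2 y)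
      = integral\<^sup>L (lebesgue_on {0<..<t0}) (\<lambda>y. indicator {0<..<x} y * ?DD y)"
  proof (rule integral_indicator_eq_if_test_integrals_eq)
    show "integrable (lebesgue_on {0<..<t0}) ?DD"
      using D(3) by (rule continuous_imp_integrable_Ioo)
    show "integral\<^sup>L (lebesgue_on {0<..<t0}) (\<lambda>y. \<phi> y * f2 y)
        = integral\<^sup>L (lebesgue_on {0<..<t0}) (\<lambda>y. \<phi> y * ?DD y)" if "test_fun {0<..<t0} \<phi>" for \<phi>
      using integral_second_deriv_eq_weak[OF _ \<open>smooth_fun f\<close> f1 f2 that] x by simp
  qed (use assms in auto)
  also have "\<dots> = integral\<^sup>L (lebesgue_on {0<..<x}) ?DD"
  proof -
    have "{0<..<x} \<subseteq> {0<..<t0}"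
      using x by auto
    then show ?thesis
      using integral_lebesgue_on_indicator[of "{0<..<x}" "{0<..<t0}" ?DD] by simp
  qed
  also have "\<dots> = integral {0..x} ?DD"
    using D(3) by (rule continuous_imp_integral_Ioo_eq)
  also have "\<dots> = ?D x - ?D 0"
    using x smooth_fun_has_deriv[OF D(1)]
    by (intro integral_unique fundamental_theorem_of_calculus)
       (auto simp: has_real_derivative_iff_has_vector_derivative[symmetric]
          has_field_derivative_at_within)
  finally show ?thesis
    using D(2) by simp
qed

lemma uniform_limit_integral_indicator:
  fixes g :: "nat \<Rightarrow> real \<Rightarrow> real"
  assumes "\<And>n. integrable (lebesgue_on {0<..<t0}) (g n)" "integrable (lebesgue_on {0<..<t0}) h"
    and "(\<lambda>n. integral\<^sup>L (lebesgue_on {0<..<t0}) (\<lambda>y. \<bar>g n y - h y\<bar>)) \<longlonglongrightarrow> 0"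
  shows "uniform_limit {0..t0}
    (\<lambda>n x. integral\<^sup>L (lebesgue_on {0<..<t0}) (\<lambda>y. indicator {0<..<x} y * g n y))
    (\<lambda>x. integral\<^sup>L (lebesgue_on {0<..<t0}) (\<lambda>y. indicator {0<..<x} y * h y)) sequentially"
  unfolding uniform_limit_iff
proof (intro allI impI)
  let ?M = "lebesgue_on {0<..<t0}"
  fix e :: real assume "0 < e"
  have bound: "dist (integral\<^sup>L ?M (\<lambda>y. indicator {0<..<x} y * g n y))
        (integral\<^sup>L ?M (\<lambda>y. indicator {0<..<x} y * h y))
      \<le> integral\<^sup>L ?M (\<lambda>y. \<bar>g n y - h y\<bar>)" if "x \<in> {0..t0}" for n x
  proof -
    have meas: "{0<..<x} \<in> sets ?M"
      using that by (subst sets_restrict_space_iff) auto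
    have "integrable ?M (\<lambda>y. indicator {0<..<x} y * g n y)"
      "integrable ?M (\<lambda>y. indicator {0<..<x} y * h y)"
      using integrable_real_mult_indicator[OF meas] assms(1,2) by (simp_all add: mult.commute)
    then have "dist (integral\<^sup>L ?M (\<lambda>y. indicator {0<..<x} y * g n y))
        (integral\<^sup>L ?M (\<lambda>y. indicator {0<..<x} y * h y))
      \<le> integral\<^sup>L ?M (\<lambda>y. \<bar>indicator {0<..<x} y * g n y - indicator {0<..<x} y * h y\<bar>)"
      using integral_norm_bound
          [of ?M "\<lambda>y. indicator {0<..<x} y * g n y - indicator {0<..<x} y * h y"]
      by (simp add: dist_real_def)
    also have "\<dots> \<le> integral\<^sup>L ?M (\<lambda>y. \<bar>g n y - h y\<bar>)"
      using \<open>integrable ?M (\<lambda>y. indicator {0<..<x} y * g n y)\<close>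
        \<open>integrable ?M (\<lambda>y. indicator {0<..<x} y * h y)\<close> assms(1,2)
      by (intro integral_mono) (auto split: split_indicator)
    finally show ?thesis .
  qed
  have "\<forall>\<^sub>F n in sequentially. integral\<^sup>L ?M (\<lambda>y. \<bar>g n y - h y\<bar>) < e"
    using order_tendstoD(2)[OF assms(3) \<open>0 < e\<close>] .
  then show "\<forall>\<^sub>F n in sequentially. \<forall>x\<in>{0..t0}.
      dist (integral\<^sup>L ?M (\<lambda>y. indicator {0<..<x} y * g n y))
        (integral\<^sup>L ?M (\<lambda>y. indicator {0<..<x} y * h y)) < e"
    by (rule eventually_mono) (use bound le_less_trans in blast)
qed

lemma uniform_limit_antiderivative:
  fixes f D :: "nat \<Rightarrow> real \<Rightarrow> real"
  assumes "0 \<le> t0"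
    and f: "\<And>n x. x \<in> {0..t0} \<Longrightarrow> (f n has_real_derivative D n x) (at x within {0..t0})"
    and D: "\<And>n. continuous_on {0..t0} (D n)" and f0: "\<And>n. f n 0 = 0"
    and lim: "uniform_limit {0..t0} D G sequentially"
  shows "uniform_limit {0..t0} f (\<lambda>x. integral {0..x} G) sequentially"
  unfolding uniform_limit_iff
proof (intro allI impI)
  fix e :: real assume "0 < e"
  have G: "continuous_on {0..t0} G"
    using lim D by (intro uniform_limit_theorem) (auto intro: always_eventually)
  have "\<forall>\<^sub>F n in sequentially. \<forall>x\<in>{0..t0}. dist (D n x) (G x) < e / (t0 + 1)"
    using lim \<open>0 < e\<close> \<open>0 \<le> t0\<close> unfolding uniform_limit_iff by simp
  then show "\<forall>\<^sub>F n in sequentially. \<forall>x\<in>{0..t0}. dist (f n x) (integral {0..x} G) < e"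
  proof (rule eventually_mono, intro ballI)
    fix n x assume close: "\<forall>x\<in>{0..t0}. dist (D n x) (G x) < e / (t0 + 1)" and x: "x \<in> {0..t0}"
    have cont: "continuous_on {0..x} (D n)" "continuous_on {0..x} G"
      using x by (auto intro!: continuous_on_subset[OF D] continuous_on_subset[OF G])
    have "((\<lambda>y. D n y - G y) has_integral f n x - integral {0..x} G) {0..x}"
    proof (rule has_integral_diff)
      have "(f n has_real_derivative D n y) (at y within {0..x})" if "y \<in> {0..x}" for y
        by (rule has_field_derivative_subset[OF f]) (use that x in auto)
      then show "(D n has_integral f n x) {0..x}"
        using fundamental_theorem_of_calculus[of 0 x "f n" "D n"] x f0
        by (simp add: has_real_derivative_iff_has_vector_derivative)
    qed (use cont in \<open>simp add: integrable_integral integrable_continuous_interval\<close>)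
    then have "f n x - integral {0..x} G = integral {0..x} (\<lambda>y. D n y - G y)"
      by (simp add: integral_unique)
    also have "norm \<dots> \<le> e / (t0 + 1) * (x - 0)"
    proof (rule integral_bound)
      show "continuous_on {0..x} (\<lambda>y. D n y - G y)"
        using cont by (intro continuous_intros)
      show "norm (D n y - G y) \<le> e / (t0 + 1)" if "y \<in> {0..x}" for y
        using close that x by (force simp: dist_real_def intro: less_imp_le)
    qed (use x in simp)
    also have "\<dots> < e"
    proof -
      have "e * x \<le> e * t0"
        using x \<open>0 < e\<close> by (simp add: mult_left_mono)
      then show ?thesis
        using \<open>0 < e\<close> \<open>0 \<le> t0\<close> by (simp add: field_simps, linarith)
    qed
    finally show "dist (f n x) (integral {0..x} G) < e"
      by (simp add: dist_norm)
  qed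
qed

lemma uniform_limit_imp_L1_tendsto_0:
  fixes f :: "nat \<Rightarrow> real \<Rightarrow> real"
  assumes f: "\<And>n. continuous_on {a..b} (f n)" and F: "continuous_on {a..b} F"
    and unif: "uniform_limit {a..b} f F sequentially"
  shows "(\<lambda>n. integral\<^sup>L (lebesgue_on {a<..<b}) (\<lambda>y. \<bar>F y - f n y\<bar>)) \<longlonglongrightarrow> 0"
proof -
  have "uniform_limit {a..b} (\<lambda>n y. \<bar>F y - f n y\<bar>) (\<lambda>_. 0) sequentially"
    using unif by (simp add: uniform_limit_iff dist_real_def abs_minus_commute)
  moreover have cont: "continuous_on {a..b} (\<lambda>y. \<bar>F y - f n y\<bar>)" for n
    using f[of n] F by (intro continuous_intros)
  ultimately obtain I J where I: "\<And>n. ((\<lambda>y. \<bar>F y - f n y\<bar>) has_integral I n) {a..b}"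
    and "((\<lambda>_. 0::real) has_integral J) {a..b}" and "I \<longlonglongrightarrow> J"
    by (rule uniform_limit_integral) auto
  moreover have "I = (\<lambda>n. integral\<^sup>L (lebesgue_on {a<..<b}) (\<lambda>y. \<bar>F y - f n y\<bar>))"
    using I cont by (simp add: fun_eq_iff continuous_imp_integral_Ioo_eq integral_unique[symmetric])
  ultimately show ?thesis
    by (simp add: has_integral_0_eq)
qed

lemma uniform_limit_eq_L1_limit:
  fixes f :: "nat \<Rightarrow> real \<Rightarrow> real"
  assumes "0 < t0" and f: "\<And>n. continuous_on {0..t0} (f n)"
    and F: "continuous_on {0..t0} F" and z: "continuous_on {0..t0} z"
    and unif: "uniform_limit {0..t0} f F sequentially"
    and L1: "(\<lambda>n. integral\<^sup>L (lebesgue_on {0<..<t0}) (\<lambda>y. \<bar>f n y - z y\<bar>)) \<longlonglongrightarrow> 0"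
    and "x \<in> {0..t0}"
  shows "F x = z x"
proof -
  let ?I = "\<lambda>g. integral\<^sup>L (lebesgue_on {0<..<t0}) g"
  have int: "integrable (lebesgue_on {0<..<t0}) g"
    if "continuous_on {0..t0} g" for g :: "real \<Rightarrow> real"
    using that by (rule continuous_imp_integrable_Ioo)
  have lim: "(\<lambda>n. ?I (\<lambda>y. \<bar>F y - f n y\<bar>) + ?I (\<lambda>y. \<bar>f n y - z y\<bar>)) \<longlonglongrightarrow> 0"
    using tendsto_add[OF uniform_limit_imp_L1_tendsto_0[OF f F unif] L1] by simp
  have "?I (\<lambda>y. \<bar>F y - z y\<bar>) \<le> ?I (\<lambda>y. \<bar>F y - f n y\<bar>) + ?I (\<lambda>y. \<bar>f n y - z y\<bar>)" for n
  proof -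
    have "?I (\<lambda>y. \<bar>F y - z y\<bar>) \<le> ?I (\<lambda>y. \<bar>F y - f n y\<bar> + \<bar>f n y - z y\<bar>)"
      using f[of n] F z by (intro integral_mono int) (auto intro!: continuous_intros)
    also have "\<dots> = ?I (\<lambda>y. \<bar>F y - f n y\<bar>) + ?I (\<lambda>y. \<bar>f n y - z y\<bar>)"
      using f[of n] F z
      by (intro Bochner_Integration.integral_add int) (auto intro!: continuous_intros)
    finally show ?thesis .
  qed
  then have "?I (\<lambda>y. \<bar>F y - z y\<bar>) \<le> 0"
    using LIMSEQ_le_const[OF lim] by blast
  moreover have "0 \<le> ?I (\<lambda>y. \<bar>F y - z y\<bar>)"
    by (rule integral_nonneg_AE) auto
  ultimately have "AE y in lebesgue_on {0<..<t0}. \<bar>F y - z y\<bar> = 0"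
    using F z by (subst integral_nonneg_eq_0_iff_AE[symmetric]) (auto intro!: int continuous_intros)
  then have "AE y in lebesgue_on {0<..<t0}. F y - z y = 0"
    by simp
  with F z have "F x - z x = 0"
    by (intro continuous_on_AE_eq_0[OF \<open>0 < t0\<close> _ _ \<open>x \<in> {0..t0}\<close>] continuous_intros)
  then show ?thesis
    by simp
qed

text \<open>Exactly the conditions under which the extension of \<open>z\<close> by zero is \<open>C\<^sup>1\<close> on the
  whole line (lemma \<open>clamped_C1_ext0\<close>).\<close>
definition clamped_C1 :: "real \<Rightarrow> (real \<Rightarrow> 'a::real_normed_vector) \<Rightarrow> (real \<Rightarrow> 'a) \<Rightarrow> bool" where
  "clamped_C1 t0 z z' \<longleftrightarrow> z 0 = 0 \<and> z t0 = 0 \<and> z' 0 = 0 \<and> z' t0 = 0 \<and> continuous_on {0..t0} z' \<and>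
     (\<forall>y\<in>{0..t0}. (z has_vector_derivative z' y) (at y within {0..t0}))"

lemma clamped_C1_if_test_approximation:
  fixes f f1 f2 :: "nat \<Rightarrow> real \<Rightarrow> real" and z w2 :: "real \<Rightarrow> real"
  assumes "0 < t0" and f: "\<And>n. test_fun {0<..<t0} (f n)"
    and f1: "\<And>n. real_weak_deriv_on {0<..<t0} (f n) (f1 n)"
    and f2: "\<And>n. real_weak_deriv_on {0<..<t0} (f1 n) (f2 n)"
    and f2_int: "\<And>n. integrable (lebesgue_on {0<..<t0}) (f2 n)"
    and w2_int: "integrable (lebesgue_on {0<..<t0}) w2"
    and f2_lim: "(\<lambda>n. integral\<^sup>L (lebesgue_on {0<..<t0}) (\<lambda>r. \<bar>f2 n r - w2 r\<bar>)) \<longlonglongrightarrow> 0"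
    and z: "continuous_on {0..t0} z"
    and f_lim: "(\<lambda>n. integral\<^sup>L (lebesgue_on {0<..<t0}) (\<lambda>r. \<bar>f n r - z r\<bar>)) \<longlonglongrightarrow> 0"
  shows "\<exists>z'. clamped_C1 t0 z z'"
proof -
  define G where "G x = integral\<^sup>L (lebesgue_on {0<..<t0}) (\<lambda>y. indicator {0<..<x} y * w2 y)" for x
  define F where "F x = integral {0..x} G" for x
  have smooth: "smooth_fun (f n)" "smooth_fun (deriv (f n))" for n
    using f by (simp_all add: test_fun_def smooth_fun_deriv)
  have vanish: "f n 0 = 0" "f n t0 = 0" "deriv (f n) 0 = 0" "deriv (f n) t0 = 0" for n
    using test_fun_eq_0[OF f] test_fun_eq_0[OF test_fun_deriv[OF f]] by auto
  have "uniform_limit {0..t0} (\<lambda>n. deriv (f n)) G sequentially"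
    using uniform_limit_integral_indicator[where g = f2 and h = w2, OF f2_int w2_int f2_lim]
      deriv_test_fun_eq_integral[OF f f1 f2 f2_int]
    unfolding G_def by (subst uniform_limit_cong') auto
  moreover have "continuous_on {0..t0} G"
    by (rule uniform_limit_theorem[OF always_eventually calculation])
       (auto intro: smooth_fun_continuous_on[OF smooth(2)])
  ultimately have G: "uniform_limit {0..t0} (\<lambda>n. deriv (f n)) G sequentially"
    "continuous_on {0..t0} G"
    by auto
  then have F: "uniform_limit {0..t0} f F sequentially"
    unfolding F_def using \<open>0 < t0\<close> smooth vanish
    by (intro uniform_limit_antiderivative)
       (auto intro: has_field_derivative_at_within[OF smooth_fun_has_deriv]
          smooth_fun_continuous_on)
  have F': "(F has_vector_derivative G y) (at y within {0..t0})" if "y \<in> {0..t0}" for y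
    unfolding F_def[abs_def] using G(2) that by (rule integral_has_vector_derivative)
  then have "continuous_on {0..t0} F"
    by (meson continuous_on_eq_continuous_within has_vector_derivative_continuous)
  then have zF: "z y = F y" if "y \<in> {0..t0}" for y
    using uniform_limit_eq_L1_limit[OF \<open>0 < t0\<close> _ _ z F f_lim] smooth that
    by (simp add: smooth_fun_continuous_on)
  have "clamped_C1 t0 z G"
    unfolding clamped_C1_def
  proof (intro conjI ballI)
    show "z 0 = 0" "G 0 = 0"
      using zF \<open>0 < t0\<close> by (simp_all add: F_def G_def)
    show "z t0 = 0"
      using LIMSEQ_unique[OF tendsto_uniform_limitI[OF F, of t0]] zF[of t0] vanish \<open>0 < t0\<close> by simp
    show "G t0 = 0"
      using LIMSEQ_unique[OF tendsto_uniform_limitI[OF G(1), of t0]] vanish \<open>0 < t0\<close> by simp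
    show "continuous_on {0..t0} G"
      by (rule G(2))
    show "(z has_vector_derivative G y) (at y within {0..t0})" if "y \<in> {0..t0}" for y
      using has_vector_derivative_transform[OF that zF F'[OF that]] .
  qed
  then show ?thesis
    by blast
qed

lemma clamped_C1_ext0:
  fixes z z' :: "real \<Rightarrow> 'a::real_normed_vector"
  assumes C1: "clamped_C1 t0 z z'"
  shows "(ext0 t0 z has_vector_derivative ext0 t0 z' y) (at y)"
    and "continuous_on UNIV (ext0 t0 z')"
proof -
  have boundary: "x \<in> {0..t0} \<Longrightarrow> x \<in> - {0<..<t0} \<Longrightarrow> x = 0 \<or> x = t0" for x
    by auto
  have "closure (- {0..t0}) = - {0<..<t0}"
    by (simp add: closure_complement)
  then have "((\<lambda>x. if x \<in> {0..t0} then z x else 0) has_vector_derivative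
      (if y \<in> {0..t0} then z' y else 0)) (at y within UNIV)"
    using C1 boundary
    by (intro has_vector_derivative_If_within_closures[where T = "- {0..t0}"])
       (auto simp: clamped_C1_def Un_absorb2)
  then show "(ext0 t0 z has_vector_derivative ext0 t0 z' y) (at y)"
    by (simp add: ext0_def[abs_def])
  have "continuous_on ({0..t0} \<union> ({..0} \<union> {t0..})) (\<lambda>x. if x \<in> {0..t0} then z' x else 0)"
    using C1 by (intro continuous_on_cases) (auto simp: clamped_C1_def)
  moreover have "{0..t0} \<union> ({..0} \<union> {t0..}) = (UNIV :: real set)"
    by auto
  ultimately show "continuous_on UNIV (ext0 t0 z')"
    by (simp add: ext0_def[abs_def])
qed

section \<open>\<open>L\<^sup>p\<close> estimates on bounded intervals\<close>

lemma Lp_norm_nonneg: "0 \<le> Lp_norm p I f"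
  by (simp add: Lp_norm_def)

lemma le_add_powr:
  fixes x \<epsilon> p :: real
  assumes "0 \<le> x" "0 < \<epsilon>" "1 \<le> p"
  shows "x \<le> \<epsilon> + \<epsilon> powr (1 - p) * x powr p"
proof (cases "x \<le> \<epsilon>")
  case False
  have "x = x * (\<epsilon> powr (1 - p) * \<epsilon> powr (p - 1))"
    using assms by (simp flip: powr_add)
  also have "\<dots> \<le> x * (\<epsilon> powr (1 - p) * x powr (p - 1))"
    using assms False by (intro mult_left_mono mult_left_mono powr_mono2) auto
  also have "\<dots> = \<epsilon> powr (1 - p) * x powr p"
    using False assms by (simp add: powr_mult_base)
  finally show ?thesis
    using assms by simp
qed (simp add: add_increasing2)

lemma memLp_imp_integrable:
  fixes f :: "real \<Rightarrow> 'a::{banach, second_countable_topology}"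
  assumes "1 \<le> p" and f: "memLp p {a<..<b} f"
  shows "integrable (lebesgue_on {a<..<b}) f"
proof -
  let ?M = "lebesgue_on {a<..<b}"
  have [measurable]: "f \<in> borel_measurable ?M"
    using f by (simp add: memLp_def)
  have "ennreal (norm (f r)) \<le> ennreal 1 + ennreal (norm (f r) powr p)" for r
  proof -
    have "ennreal (norm (f r)) \<le> ennreal (1 + norm (f r) powr p)"
      using le_add_powr[of "norm (f r)" 1 p] assms(1) by (intro ennreal_leI) simp
    also have "\<dots> = ennreal 1 + ennreal (norm (f r) powr p)"
      by (rule ennreal_plus) auto
    finally show ?thesis .
  qed
  then have "(\<integral>\<^sup>+ r. ennreal (norm (f r)) \<partial>?M) \<le> (\<integral>\<^sup>+ r. ennreal 1 + ennreal (norm (f r) powr p) \<partial>?M)"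
    by (intro nn_integral_mono)
  also have "\<dots> = emeasure ?M {a<..<b} + Lp_integral p {a<..<b} f"
    by (subst nn_integral_add) (auto simp: Lp_integral_def space_restrict_space)
  also have "\<dots> < \<infinity>"
    using f emeasure_bounded_finite[of "{a<..<b}"] by (simp add: memLp_def emeasure_restrict_space)
  finally show ?thesis
    by (simp add: integrable_iff_bounded)
qed

lemma memLp_diff:
  fixes f g :: "real \<Rightarrow> 'a::{banach, second_countable_topology}"
  assumes "0 < p" and f: "memLp p I f" and g: "memLp p I g"
  shows "memLp p I (\<lambda>r. f r - g r)"
proof -
  have [measurable]: "f \<in> borel_measurable (lebesgue_on I)" "g \<in> borel_measurable (lebesgue_on I)"
    using f g by (auto simp: memLp_def)
  have "norm (f r - g r) powr p \<le> 2 powr p * (norm (f r) powr p + norm (g r) powr p)" for r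
  proof -
    have "norm (f r - g r) powr p \<le> (2 * max (norm (f r)) (norm (g r))) powr p"
      using \<open>0 < p\<close> norm_triangle_ineq4[of "f r" "g r"] by (intro powr_mono2) auto
    also have "\<dots> = 2 powr p * max (norm (f r)) (norm (g r)) powr p"
      by (simp add: powr_mult)
    also have "\<dots> \<le> 2 powr p * (norm (f r) powr p + norm (g r) powr p)"
      by (intro mult_left_mono) (auto simp: max_def)
    finally show ?thesis .
  qed
  then have "Lp_integral p I (\<lambda>r. f r - g r) \<le>
      (\<integral>\<^sup>+ r. ennreal (2 powr p) * (ennreal (norm (f r) powr p) + ennreal (norm (g r) powr p))
        \<partial>lebesgue_on I)"
    unfolding Lp_integral_def
    by (intro nn_integral_mono) (simp flip: ennreal_plus ennreal_mult add: ennreal_leI)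
  also have "\<dots> = ennreal (2 powr p) * (Lp_integral p I f + Lp_integral p I g)"
    by (simp add: Lp_integral_def nn_integral_cmult nn_integral_add)
  also have "\<dots> < \<infinity>"
    using f g by (simp add: memLp_def ennreal_mult_less_top)
  finally show ?thesis
    by (simp add: memLp_def)
qed

lemma integral_norm_le_Lp_norm:
  fixes h :: "real \<Rightarrow> 'a::{banach, second_countable_topology}"
  assumes "1 \<le> p" "a \<le> b" and h: "memLp p {a<..<b} h" and "0 < \<epsilon>"
  shows "integral\<^sup>L (lebesgue_on {a<..<b}) (\<lambda>r. norm (h r))
    \<le> \<epsilon> * (b - a) + \<epsilon> powr (1 - p) * Lp_norm p {a<..<b} h powr p"
proof -
  let ?M = "lebesgue_on {a<..<b}"
  have [measurable]: "h \<in> borel_measurable ?M" and fin: "Lp_integral p {a<..<b} h < \<infinity>"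
    using h by (auto simp: memLp_def)
  have Lp: "Lp_integral p {a<..<b} h = ennreal (Lp_norm p {a<..<b} h powr p)"
    using fin assms(1) by (simp add: Lp_norm_def powr_powr ennreal_enn2real less_top)
  have "(\<integral>\<^sup>+ r. ennreal (norm (h r)) \<partial>?M)
      \<le> (\<integral>\<^sup>+ r. ennreal \<epsilon> + ennreal (\<epsilon> powr (1 - p)) * ennreal (norm (h r) powr p) \<partial>?M)"
    using le_add_powr[of "norm (h _)" \<epsilon> p] assms(1,4)
    by (intro nn_integral_mono) (simp flip: ennreal_plus ennreal_mult add: ennreal_leI)
  also have "\<dots> = ennreal \<epsilon> * emeasure ?M {a<..<b}
      + ennreal (\<epsilon> powr (1 - p)) * Lp_integral p {a<..<b} h"
    by (subst nn_integral_add)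
       (auto simp: nn_integral_cmult Lp_integral_def space_restrict_space)
  also have "\<dots> = ennreal (\<epsilon> * (b - a) + \<epsilon> powr (1 - p) * Lp_norm p {a<..<b} h powr p)"
    using assms by (simp add: Lp emeasure_restrict_space flip: ennreal_plus ennreal_mult)
  finally show ?thesis
    using assms by (simp add: integral_eq_nn_integral enn2real_leI)
qed

lemma Lp_norm_tendsto_0_imp_L1:
  fixes h :: "nat \<Rightarrow> real \<Rightarrow> 'a::{banach, second_countable_topology}"
  assumes "1 \<le> p" "a \<le> b" and h: "\<And>n. memLp p {a<..<b} (h n)"
    and lim: "(\<lambda>n. Lp_norm p {a<..<b} (h n)) \<longlonglongrightarrow> 0"
  shows "(\<lambda>n. integral\<^sup>L (lebesgue_on {a<..<b}) (\<lambda>r. norm (h n r))) \<longlonglongrightarrow> 0"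
proof (rule order_tendstoI)
  fix e :: real assume "e < 0"
  moreover have "0 \<le> integral\<^sup>L (lebesgue_on {a<..<b}) (\<lambda>r. norm (h n r))" for n
    by (rule integral_nonneg_AE) auto
  ultimately show "\<forall>\<^sub>F n in sequentially. e < integral\<^sup>L (lebesgue_on {a<..<b}) (\<lambda>r. norm (h n r))"
    by (intro always_eventually allI) (meson less_le_trans)
next
  fix e :: real assume "0 < e"
  define \<epsilon> where "\<epsilon> = e / (2 * (b - a + 1))"
  have "0 < \<epsilon>" "\<epsilon> * (b - a) < e / 2"
    using \<open>0 < e\<close> \<open>a \<le> b\<close> by (auto simp: \<epsilon>_def field_simps)
  have "(\<lambda>n. \<epsilon> powr (1 - p) * Lp_norm p {a<..<b} (h n) powr p) \<longlonglongrightarrow> \<epsilon> powr (1 - p) * 0"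
    using assms(1) by (intro tendsto_mult_left tendsto_zero_powrI[OF lim tendsto_const])
      (auto simp: Lp_norm_def)
  then have "\<forall>\<^sub>F n in sequentially. \<epsilon> powr (1 - p) * Lp_norm p {a<..<b} (h n) powr p < e / 2"
    using \<open>0 < e\<close> by (intro order_tendstoD(2)) auto
  then show "\<forall>\<^sub>F n in sequentially. integral\<^sup>L (lebesgue_on {a<..<b}) (\<lambda>r. norm (h n r)) < e"
  proof (rule eventually_mono)
    fix n assume "\<epsilon> powr (1 - p) * Lp_norm p {a<..<b} (h n) powr p < e / 2"
    then show "integral\<^sup>L (lebesgue_on {a<..<b}) (\<lambda>r. norm (h n r)) < e"
      using integral_norm_le_Lp_norm[OF assms(1,2) h \<open>0 < \<epsilon>\<close>, of n] \<open>\<epsilon> * (b - a) < e / 2\<close>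
      by linarith
  qed
qed

lemma integrable_continuous_scaleR:
  fixes f :: "real \<Rightarrow> 'a::{banach, second_countable_topology}"
  assumes f: "integrable (lebesgue_on {a<..<b}) f" and g: "continuous_on {a..b} g"
  shows "integrable (lebesgue_on {a<..<b}) (\<lambda>r. g r *\<^sub>R f r)"
proof -
  obtain B where "\<forall>x\<in>g ` {a..b}. norm x \<le> B"
    using compact_imp_bounded[OF compact_continuous_image[OF g compact_Icc]]
    by (auto simp: bounded_iff)
  then have B: "\<And>y. y \<in> {a..b} \<Longrightarrow> \<bar>g y\<bar> \<le> B"
    by auto
  show ?thesis
  proof (rule Bochner_Integration.integrable_bound[where f = "\<lambda>r. B *\<^sub>R f r"])
    show "integrable (lebesgue_on {a<..<b}) (\<lambda>r. B *\<^sub>R f r)"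
      using f by simp
    have "g \<in> borel_measurable (lebesgue_on {a<..<b})"
      by (rule continuous_imp_measurable_on_sets_lebesgue[OF continuous_on_subset[OF g]]) auto
    then show "(\<lambda>r. g r *\<^sub>R f r) \<in> borel_measurable (lebesgue_on {a<..<b})"
      using borel_measurable_integrable[OF f] by (rule borel_measurable_scaleR)
    show "AE r in lebesgue_on {a<..<b}. norm (g r *\<^sub>R f r) \<le> norm (B *\<^sub>R f r)"
      using B by (intro AE_I2)
        (auto simp: space_restrict_space intro!: mult_right_mono order.trans[OF _ abs_ge_self])
  qed
qed

lemma real_weak_deriv_on_bounded_linear:
  fixes f g :: "real \<Rightarrow> complex^'l" and T :: "complex^'l \<Rightarrow> real"
  assumes T: "bounded_linear T" and fg: "weak_deriv_on {a<..<b} f g"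
    and f: "integrable (lebesgue_on {a<..<b}) f" and g: "integrable (lebesgue_on {a<..<b}) g"
  shows "real_weak_deriv_on {a<..<b} (\<lambda>r. T (f r)) (\<lambda>r. T (g r))"
  unfolding real_weak_deriv_on_def
proof (intro allI impI)
  interpret T: bounded_linear T by (fact T)
  fix \<phi> assume \<phi>: "test_fun {a<..<b} \<phi>"
  then have "smooth_fun \<phi>"
    by (simp add: test_fun_def)
  then have int: "integrable (lebesgue_on {a<..<b}) (\<lambda>r. deriv \<phi> r *\<^sub>R f r)"
    "integrable (lebesgue_on {a<..<b}) (\<lambda>r. \<phi> r *\<^sub>R g r)"
    using f g
    by (auto intro!: integrable_continuous_scaleR smooth_fun_continuous_on smooth_fun_deriv)
  have "integral\<^sup>L (lebesgue_on {a<..<b}) (\<lambda>r. deriv \<phi> r * T (f r))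
      = T (integral\<^sup>L (lebesgue_on {a<..<b}) (\<lambda>r. deriv \<phi> r *\<^sub>R f r))"
    using integral_bounded_linear[OF T int(1)] by (simp add: T.scaleR)
  also have "\<dots> = - T (integral\<^sup>L (lebesgue_on {a<..<b}) (\<lambda>r. \<phi> r *\<^sub>R g r))"
    using fg \<phi> by (simp add: weak_deriv_on_def T.neg)
  also have "\<dots> = - integral\<^sup>L (lebesgue_on {a<..<b}) (\<lambda>r. \<phi> r * T (g r))"
    using integral_bounded_linear[OF T int(2)] by (simp add: T.scaleR)
  finally show "integral\<^sup>L (lebesgue_on {a<..<b}) (\<lambda>r. deriv \<phi> r * T (f r))
      = - integral\<^sup>L (lebesgue_on {a<..<b}) (\<lambda>r. \<phi> r * T (g r))" .
qed

lemma L1_tendsto_bounded_linear: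
  fixes T :: "'a::{banach, second_countable_topology} \<Rightarrow> real"
  assumes T: "bounded_linear T" and int: "\<And>n. integrable M (\<lambda>r. f n r - g r)"
    and lim: "(\<lambda>n. integral\<^sup>L M (\<lambda>r. norm (f n r - g r))) \<longlonglongrightarrow> 0"
  shows "(\<lambda>n. integral\<^sup>L M (\<lambda>r. \<bar>T (f n r) - T (g r)\<bar>)) \<longlonglongrightarrow> 0"
proof -
  interpret T: bounded_linear T by (fact T)
  obtain K where K: "\<And>x. norm (T x) \<le> norm x * K"
    using T.bounded by blast
  show ?thesis
  proof (rule tendsto_sandwich[OF _ _ tendsto_const tendsto_mult_left_zero[OF lim, where c = K]])
    show "\<forall>\<^sub>F n in sequentially. 0 \<le> integral\<^sup>L M (\<lambda>r. \<bar>T (f n r) - T (g r)\<bar>)"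
      by (intro always_eventually allI integral_nonneg_AE) auto
    have "integral\<^sup>L M (\<lambda>r. \<bar>T (f n r - g r)\<bar>) \<le> integral\<^sup>L M (\<lambda>r. norm (f n r - g r) * K)" for n
      using K int[of n] by (intro integral_mono) (auto intro: integrable_bounded_linear[OF T])
    then show "\<forall>\<^sub>F n in sequentially. integral\<^sup>L M (\<lambda>r. \<bar>T (f n r) - T (g r)\<bar>)
        \<le> integral\<^sup>L M (\<lambda>r. norm (f n r - g r)) * K"
      by (intro always_eventually allI) (simp add: T.diff)
  qed
qed

section \<open>\<open>W\<^sup>2\<^sup>,\<^sup>p\<^sub>0\<close> functions are \<open>C\<^sup>1\<close> up to the boundary\<close>

lemma clamped_C1_bounded_linear_of_W2p_approx:
  fixes u u1 u2 :: "real \<Rightarrow> complex^'l" and \<psi> \<psi>1 \<psi>2 :: "nat \<Rightarrow> real \<Rightarrow> complex^'l"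
    and T :: "complex^'l \<Rightarrow> real"
  assumes "1 \<le> p" "0 < t0" and T: "bounded_linear T"
    and u: "W2p p {0<..<t0} u u1 u2" "continuous_on {0..t0} u"
    and \<psi>: "\<And>n. test_fun {0<..<t0} (\<lambda>r. T (\<psi> n r))" "\<And>n. W2p p {0<..<t0} (\<psi> n) (\<psi>1 n) (\<psi>2 n)"
    and lim0: "(\<lambda>n. Lp_norm p {0<..<t0} (\<lambda>r. \<psi> n r - u r)) \<longlonglongrightarrow> 0"
    and lim2: "(\<lambda>n. Lp_norm p {0<..<t0} (\<lambda>r. \<psi>2 n r - u2 r)) \<longlonglongrightarrow> 0"
  shows "\<exists>z'. clamped_C1 t0 (\<lambda>r. T (u r)) z'"
proof -
  let ?I = "{0<..<t0}"
  have int: "integrable (lebesgue_on ?I) g" if "memLp p ?I g" for g :: "real \<Rightarrow> complex^'l"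
    using memLp_imp_integrable[OF \<open>1 \<le> p\<close> that] .
  have L1: "(\<lambda>n. integral\<^sup>L (lebesgue_on ?I) (\<lambda>r. \<bar>T (v n r) - T (w r)\<bar>)) \<longlonglongrightarrow> 0"
    if "\<And>n. memLp p ?I (v n)" "memLp p ?I w" "(\<lambda>n. Lp_norm p ?I (\<lambda>r. v n r - w r)) \<longlonglongrightarrow> 0"
    for v :: "nat \<Rightarrow> real \<Rightarrow> complex^'l" and w
  proof -
    have "memLp p ?I (\<lambda>r. v n r - w r)" for n
      using that(1,2) \<open>1 \<le> p\<close> by (intro memLp_diff) auto
    then show ?thesis
      using \<open>1 \<le> p\<close> \<open>0 < t0\<close> that(3)
      by (intro L1_tendsto_bounded_linear[OF T] int Lp_norm_tendsto_0_imp_L1) auto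
  qed
  show ?thesis
  proof (rule clamped_C1_if_test_approximation[OF \<open>0 < t0\<close> \<psi>(1)])
    show "real_weak_deriv_on ?I (\<lambda>r. T (\<psi> n r)) (\<lambda>r. T (\<psi>1 n r))"
      "real_weak_deriv_on ?I (\<lambda>r. T (\<psi>1 n r)) (\<lambda>r. T (\<psi>2 n r))"
      "integrable (lebesgue_on ?I) (\<lambda>r. T (\<psi>2 n r))" for n
      using \<psi>(2)[of n] by (auto simp: W2p_def intro!: real_weak_deriv_on_bounded_linear[OF T] int
          integrable_bounded_linear[OF T])
    show "integrable (lebesgue_on ?I) (\<lambda>r. T (u2 r))"
      using u(1) by (auto simp: W2p_def intro!: int integrable_bounded_linear[OF T])
    show "(\<lambda>n. integral\<^sup>L (lebesgue_on ?I) (\<lambda>r. \<bar>T (\<psi>2 n r) - T (u2 r)\<bar>)) \<longlonglongrightarrow> 0"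
      "(\<lambda>n. integral\<^sup>L (lebesgue_on ?I) (\<lambda>r. \<bar>T (\<psi> n r) - T (u r)\<bar>)) \<longlonglongrightarrow> 0"
      using \<psi>(2) u(1) lim0 lim2 by (auto simp: W2p_def intro!: L1)
    show "continuous_on {0..t0} (\<lambda>r. T (u r))"
      by (rule bounded_linear.continuous_on[OF T u(2)])
  qed
qed

lemma has_vector_derivative_vec_nth:
  fixes f :: "real \<Rightarrow> 'a::real_normed_vector^'n"
  assumes "\<And>i. ((\<lambda>x. f x $ i) has_vector_derivative D $ i) F"
  shows "(f has_vector_derivative D) F"
  using assms
  by (auto simp: has_vector_derivative_def has_derivative_def bounded_linear_scaleR_left
      intro!: vec_tendstoI)

lemma clamped_C1_vec_complex:
  fixes u :: "real \<Rightarrow> complex^'l"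
  assumes "\<And>i. clamped_C1 t0 (\<lambda>r. Re (u r $ i)) (Gr i)"
    and "\<And>i. clamped_C1 t0 (\<lambda>r. Im (u r $ i)) (Gi i)"
  shows "clamped_C1 t0 u (\<lambda>y. \<chi> i. Complex (Gr i y) (Gi i y))"
  using assms unfolding clamped_C1_def
  by (auto simp: vec_eq_iff complex_eq_iff has_vector_derivative_complex_iff
      has_real_derivative_iff_has_vector_derivative
      intro!: has_vector_derivative_vec_nth continuous_intros)

lemma W2p0_clamped_C1:
  fixes u :: "real \<Rightarrow> complex^'l"
  assumes "1 \<le> p" "0 < t0" "W2p0 p {0<..<t0} V u" "continuous_on {0..t0} u"
  shows "\<exists>u'. clamped_C1 t0 u u'"
proof -
  obtain u1 u2 \<psi> \<psi>1 \<psi>2 where u: "W2p p {0<..<t0} u u1 u2"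
    and \<psi>: "\<And>n. vec_test_fun {0<..<t0} (\<psi> n)" "\<And>n. W2p p {0<..<t0} (\<psi> n) (\<psi>1 n) (\<psi>2 n)"
    and lim: "(\<lambda>n. Lp_norm p {0<..<t0} (\<lambda>r. \<psi> n r - u r) + Lp_norm p {0<..<t0} (\<lambda>r. \<psi>1 n r - u1 r)
                 + Lp_norm p {0<..<t0} (\<lambda>r. \<psi>2 n r - u2 r)) \<longlonglongrightarrow> 0"
    using assms(3) unfolding W2p0_def by blast
  have lim0: "(\<lambda>n. Lp_norm p {0<..<t0} (\<lambda>r. \<psi> n r - u r)) \<longlonglongrightarrow> 0"
    and lim2: "(\<lambda>n. Lp_norm p {0<..<t0} (\<lambda>r. \<psi>2 n r - u2 r)) \<longlonglongrightarrow> 0"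
    by (rule tendsto_sandwich[OF _ _ tendsto_const lim];
        auto intro!: always_eventually simp: Lp_norm_nonneg add_increasing add_increasing2)+
  have "\<exists>G. clamped_C1 t0 (\<lambda>r. T (u r $ i)) G" if "T = Re \<or> T = Im" for T i
    using that \<psi>(1) assms(1,2,4)
    by (intro clamped_C1_bounded_linear_of_W2p_approx[OF _ _ _ u(1) _ _ \<psi>(2) lim0 lim2])
       (auto simp: vec_test_fun_def intro: bounded_linear_compose[OF bounded_linear_Re]
         bounded_linear_compose[OF bounded_linear_Im])
  then obtain Gr Gi where "\<And>i. clamped_C1 t0 (\<lambda>r. Re (u r $ i)) (Gr i)"
    "\<And>i. clamped_C1 t0 (\<lambda>r. Im (u r $ i)) (Gi i)"
    by metis
  then show ?thesis
    using clamped_C1_vec_complex by blast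
qed

section \<open>Travelling waves in \<open>L\<^sup>p(0, \<infinity>)\<close>\<close>

lemma borel_measurable_lebesgue_on_if_continuous:
  "continuous_on UNIV f \<Longrightarrow> S \<in> sets lebesgue \<Longrightarrow> f \<in> borel_measurable (lebesgue_on S)"
  by (rule continuous_imp_measurable_on_sets_lebesgue[OF continuous_on_subset]) auto

lemma
  fixes f :: "real \<Rightarrow> 'a::{banach, second_countable_topology}"
  assumes p: "1 \<le> p" and "0 < T" "0 \<le> C" and f: "f \<in> borel_measurable (lebesgue_on {0<..})"
    and bound: "\<And>r. 0 < r \<Longrightarrow> norm (f r) \<le> C" and support: "\<And>r. T < r \<Longrightarrow> f r = 0"
  shows memLp_Ioi_if_bounded: "memLp p {0<..} f"
    and Lp_norm_Ioi_le: "Lp_norm p {0<..} f \<le> C * T powr (1 / p)"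
proof -
  let ?M = "lebesgue_on ({0<..} :: real set)"
  have "Lp_integral p {0<..} f \<le> (\<integral>\<^sup>+ r. ennreal (C powr p) * indicator {0<..T} r \<partial>?M)"
    unfolding Lp_integral_def
  proof (rule nn_integral_mono)
    fix r assume "r \<in> space ?M"
    then have "0 < r"
      by (simp add: space_restrict_space)
    then show "ennreal (norm (f r) powr p) \<le> ennreal (C powr p) * indicator {0<..T} r"
      using bound[of r] support[of r] p
      by (cases "r \<le> T") (auto intro!: ennreal_leI powr_mono2)
  qed
  also have "\<dots> = ennreal (C powr p) * emeasure ?M {0<..T}"
    by (rule nn_integral_cmult_indicator) (auto simp: sets_restrict_space_iff)
  also have "emeasure ?M {0<..T} = ennreal T"
    using \<open>0 < T\<close> by (subst emeasure_restrict_space) auto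
  also have "ennreal (C powr p) * ennreal T = ennreal (C powr p * T)"
    using \<open>0 < T\<close> by (simp add: ennreal_mult)
  finally have le: "Lp_integral p {0<..} f \<le> ennreal (C powr p * T)" .
  then show "memLp p {0<..} f"
    using f by (simp add: memLp_def le_less_trans)
  have "Lp_norm p {0<..} f \<le> (C powr p * T) powr (1 / p)"
    unfolding Lp_norm_def using le p \<open>0 < T\<close> by (intro powr_mono2 enn2real_leI) auto
  also have "\<dots> = C * T powr (1 / p)"
    using p \<open>0 \<le> C\<close> by (simp add: powr_mult powr_powr)
  finally show "Lp_norm p {0<..} f \<le> C * T powr (1 / p)" .
qed

lemma Lp_norm_Ioi_quotient_tendsto_0:
  fixes f :: "real \<Rightarrow> real \<Rightarrow> 'a::{banach, second_countable_topology}"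
  assumes p: "1 \<le> p" and "0 < T"
    and cont: "\<And>s. continuous_on UNIV (f s)" and support: "\<And>s r. s \<in> S \<Longrightarrow> T < r \<Longrightarrow> f s r = 0"
    and w: "\<And>s. s \<in> S \<Longrightarrow> s \<noteq> t \<Longrightarrow> 0 < w s"
    and small: "\<And>e. 0 < e \<Longrightarrow> \<forall>\<^sub>F s in at t within S. \<forall>r>0. norm (f s r) \<le> e * w s"
  shows "((\<lambda>s. Lp_norm p {0<..} (f s) / w s) \<longlongrightarrow> 0) (at t within S)"
proof -
  have S: "\<forall>\<^sub>F s in at t within S. s \<in> S \<and> 0 < w s"
    using w by (auto simp: eventually_at_filter)
  show ?thesis
  proof (rule order_tendstoI)
    fix e :: real assume "e < 0"
    show "\<forall>\<^sub>F s in at t within S. e < Lp_norm p {0<..} (f s) / w s"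
      using S
    proof eventually_elim
      case (elim s)
      then have "0 \<le> Lp_norm p {0<..} (f s) / w s"
        by (simp add: Lp_norm_nonneg)
      then show ?case
        using \<open>e < 0\<close> by linarith
    qed
  next
    fix e :: real assume "0 < e"
    define K where "K = T powr (1 / p)"
    have "0 < K"
      using \<open>0 < T\<close> by (simp add: K_def)
    with \<open>0 < e\<close> have "\<forall>\<^sub>F s in at t within S. \<forall>r>0. norm (f s r) \<le> e / (2 * K) * w s"
      by (intro small) simp
    with S show "\<forall>\<^sub>F s in at t within S. Lp_norm p {0<..} (f s) / w s < e"
    proof eventually_elim
      case (elim s)
      have "Lp_norm p {0<..} (f s) \<le> e / (2 * K) * w s * T powr (1 / p)"
        using elim \<open>0 < e\<close> \<open>0 < K\<close> support[of s]
        by (intro Lp_norm_Ioi_le[OF p \<open>0 < T\<close>] borel_measurable_lebesgue_on_if_continuous[OF cont])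
          auto
      also have "\<dots> = e / 2 * w s"
        using \<open>0 < K\<close> by (simp add: K_def[symmetric])
      finally have "Lp_norm p {0<..} (f s) / w s \<le> e / 2"
        using elim by (simp add: pos_divide_le_eq)
      then show ?case
        using \<open>0 < e\<close> by linarith
    qed
  qed
qed

lemma uniformly_continuous_on_if_vanishing_outside:
  fixes V :: "real \<Rightarrow> 'a::real_normed_vector"
  assumes V: "continuous_on UNIV V" and vanish: "\<And>y. y \<notin> {a..b} \<Longrightarrow> V y = 0"
  shows "uniformly_continuous_on UNIV V"
  unfolding uniformly_continuous_on_def
proof (intro allI impI)
  fix e :: real assume "0 < e"
  have "uniformly_continuous_on {a - 1..b + 1} V"
    by (rule compact_uniformly_continuous[OF continuous_on_subset[OF V]]) auto
  then obtain d where "0 < d"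
    and d: "\<And>x x'. x \<in> {a - 1..b + 1} \<Longrightarrow> x' \<in> {a - 1..b + 1} \<Longrightarrow> dist x' x < d
      \<Longrightarrow> dist (V x') (V x) < e"
    using \<open>0 < e\<close> unfolding uniformly_continuous_on_def by metis
  show "\<exists>d>0. \<forall>x\<in>UNIV. \<forall>x'\<in>UNIV. dist x' x < d \<longrightarrow> dist (V x') (V x) < e"
  proof (intro exI[of _ "min d 1"] conjI ballI impI)
    fix x x' :: real assume close: "dist x' x < min d 1"
    show "dist (V x') (V x) < e"
    proof (cases "x \<in> {a - 1..b + 1} \<and> x' \<in> {a - 1..b + 1}")
      case False
      then have "x \<notin> {a..b}" "x' \<notin> {a..b}"
        using close by (auto simp: dist_real_def)
      then show ?thesis
        using vanish \<open>0 < e\<close> by simp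
    qed (use d close in auto)
  qed (use \<open>0 < d\<close> in simp)
qed

lemma norm_linearization_le:
  fixes v V :: "real \<Rightarrow> 'a::real_normed_vector"
  assumes v: "\<And>y. (v has_vector_derivative V y) (at y)"
    and B: "\<And>y. \<bar>y - a\<bar> \<le> \<bar>b - a\<bar> \<Longrightarrow> norm (V y - V a) \<le> B"
  shows "norm (v b - v a - (b - a) *\<^sub>R V a) \<le> \<bar>b - a\<bar> * B"
proof -
  let ?S = "{y. \<bar>y - a\<bar> \<le> \<bar>b - a\<bar>}"
  have "norm (v b - v a - (\<lambda>h. h *\<^sub>R V a) (b - a)) \<le> norm (b - a) * B"
  proof (rule differentiable_bound_linearization[where S = ?S and f' = "\<lambda>x h. h *\<^sub>R V x"])
    show "a + t *\<^sub>R (b - a) \<in> ?S" if "t \<in> {0..1}" for t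
      using that by (auto simp: abs_mult intro: mult_left_le_one_le)
    show "(v has_derivative (\<lambda>h. h *\<^sub>R V x)) (at x within ?S)" for x
      using v[of x] unfolding has_vector_derivative_def by (rule has_derivative_at_withinI)
    show "onorm ((\<lambda>h. h *\<^sub>R V x) - (\<lambda>h. h *\<^sub>R V a)) \<le> B" if "x \<in> ?S" for x
    proof -
      have "(\<lambda>h. h *\<^sub>R V x) - (\<lambda>h. h *\<^sub>R V a) = (\<lambda>h::real. h *\<^sub>R (V x - V a))"
        by (auto simp: fun_eq_iff scaleR_diff_right)
      then show ?thesis
        using B[of x] that by (simp add: onorm_scaleR_left[OF bounded_linear_ident] onorm_id)
    qed
  qed simp
  then show ?thesis
    by simp
qed

lemma test_fun_Ioi_vanishes_far:
  assumes "test_fun {0<..} \<phi>"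
  obtains M where "0 < M" "\<And>r. M \<le> r \<Longrightarrow> \<phi> r = 0 \<and> deriv \<phi> r = 0"
proof -
  let ?S = "closure {r. \<phi> r \<noteq> 0} \<union> closure {r. deriv \<phi> r \<noteq> 0}"
  have "compact (closure {r. \<phi> r \<noteq> 0})" "compact (closure {r. deriv \<phi> r \<noteq> 0})"
    using assms test_fun_deriv[OF assms] by (simp_all add: test_fun_def)
  then have "bounded ?S"
    by (simp add: compact_imp_bounded)
  then obtain B where B: "\<forall>x\<in>?S. norm x \<le> B"
    by (auto simp: bounded_iff)
  have "\<phi> r = 0 \<and> deriv \<phi> r = 0" if "\<bar>B\<bar> + 1 \<le> r" for r
  proof -
    have "r \<notin> ?S"
      using B that by force
    then show ?thesis
      using closure_subset[of "{r. \<phi> r \<noteq> 0}"] closure_subset[of "{r. deriv \<phi> r \<noteq> 0}"] by blast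
  qed
  then show ?thesis
    using that[of "\<bar>B\<bar> + 1"] by simp
qed

lemma weak_deriv_on_Ioi_C1:
  fixes v V :: "real \<Rightarrow> complex^'l"
  assumes v: "\<And>y. (v has_vector_derivative V y) (at y)" and V: "continuous_on UNIV V"
  shows "weak_deriv_on {0<..} v V"
  unfolding weak_deriv_on_def
proof (intro allI impI)
  fix \<phi> assume \<phi>: "test_fun {0<..} \<phi>"
  then have "smooth_fun \<phi>" "\<phi> 0 = 0"
    using test_fun_eq_0[OF \<phi>, of 0] by (simp_all add: test_fun_def)
  then have \<phi>_cont: "continuous_on A \<phi>" "continuous_on A (deriv \<phi>)" for A
    by (simp_all add: smooth_fun_continuous_on smooth_fun_deriv)
  obtain M where "0 < M" and M: "\<And>r. M \<le> r \<Longrightarrow> \<phi> r = 0 \<and> deriv \<phi> r = 0"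
    using test_fun_Ioi_vanishes_far[OF \<phi>] by blast
  have "continuous_on UNIV v"
    by (rule continuous_at_imp_continuous_on) (use v has_vector_derivative_continuous in blast)
  then have cont: "continuous_on UNIV (\<lambda>r. deriv \<phi> r *\<^sub>R v r)" "continuous_on UNIV (\<lambda>r. \<phi> r *\<^sub>R V r)"
    using V \<phi>_cont by (auto intro!: continuous_intros)
  have restrict: "integral\<^sup>L (lebesgue_on {0<..}) F = integral\<^sup>L (lebesgue_on {0<..<M}) F"
    if "\<And>r. M \<le> r \<Longrightarrow> F r = 0" for F :: "real \<Rightarrow> complex^'l"
  proof -
    have "integral\<^sup>L (lebesgue_on {0<..}) F
        = integral\<^sup>L (lebesgue_on {0<..}) (\<lambda>r. indicator {0<..<M} r *\<^sub>R F r)"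
    proof (rule Bochner_Integration.integral_cong[OF refl])
      fix r :: real assume "r \<in> space (lebesgue_on {0<..})"
      then show "F r = indicator {0<..<M} r *\<^sub>R F r"
        using that[of r] by (cases "r < M") (auto simp: space_restrict_space)
    qed
    also have "\<dots> = integral\<^sup>L (lebesgue_on {0<..<M}) F"
      by (rule integral_lebesgue_on_indicator) auto
    finally show ?thesis .
  qed
  have "integral\<^sup>L (lebesgue_on {0<..<M}) (\<lambda>r. deriv \<phi> r *\<^sub>R v r)
      = - integral\<^sup>L (lebesgue_on {0<..<M}) (\<lambda>r. \<phi> r *\<^sub>R V r)"
  proof (rule integration_by_parts_lebesgue_on_Ioo)
    show "(\<phi> has_real_derivative deriv \<phi> x) (at x)" for x
      using \<open>smooth_fun \<phi>\<close> by (rule smooth_fun_has_deriv)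
    show "continuous_on {0..M} V"
      using V by (rule continuous_on_subset) simp
  qed (use \<open>0 < M\<close> M[of M] \<open>\<phi> 0 = 0\<close> v \<phi>_cont in simp_all)
  then show "integral\<^sup>L (lebesgue_on {0<..}) (\<lambda>r. deriv \<phi> r *\<^sub>R v r)
      = - integral\<^sup>L (lebesgue_on {0<..}) (\<lambda>r. \<phi> r *\<^sub>R V r)"
    using M by (simp add: restrict)
qed

lemma trace0_continuous:
  assumes h: "continuous_on {0..} h"
  shows "trace0 h = h 0"
  unfolding trace0_def
proof (rule the_equality)
  show "\<exists>g. continuous_on {0..} g \<and> (AE r in lebesgue_on {0<..}. h r = g r) \<and> g 0 = h 0"
    using h by blast
next
  fix c assume "\<exists>g. continuous_on {0..} g \<and> (AE r in lebesgue_on {0<..}. h r = g r) \<and> g 0 = c"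
  then obtain g where g: "continuous_on {0..} g" "AE r in lebesgue_on {0<..}. h r = g r" "g 0 = c"
    by blast
  have "AE r in lebesgue. r \<in> {0<..} \<longrightarrow> h r = g r"
    using g(2) by (subst (asm) AE_restrict_space_iff) auto
  then have "AE r in lebesgue. r \<in> {0<..<1} \<longrightarrow> h r - g r = 0"
    by eventually_elim auto
  then have "AE r in lebesgue_on {0<..<1}. h r - g r = 0"
    by (subst AE_restrict_space_iff) auto
  moreover have "continuous_on {0..1} (\<lambda>r. h r - g r)"
    using continuous_on_subset[OF h, of "{0..1}"] continuous_on_subset[OF g(1), of "{0..1}"]
    by (intro continuous_intros) auto
  ultimately have "h 0 - g 0 = 0"
    using continuous_on_AE_eq_0[of 0 1 "\<lambda>r. h r - g r" 0] by simp
  then show "c = h 0"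
    using g(3) by simp
qed

lemma has_vector_derivative_eq_0_outside:
  fixes v V :: "real \<Rightarrow> 'a::real_normed_vector"
  assumes v: "\<And>y. (v has_vector_derivative V y) (at y)"
    and vanish: "\<And>y. y \<notin> {a..b} \<Longrightarrow> v y = 0" and "y \<notin> {a..b}"
  shows "V y = 0"
proof -
  have "(v has_vector_derivative 0) (at y)"
    by (rule has_vector_derivative_transform_within_open[of "\<lambda>_. 0" _ _ "- {a..b}"])
       (use vanish \<open>y \<notin> {a..b}\<close> in auto)
  then show ?thesis
    using vector_derivative_unique_at[OF v] by blast
qed

lemma has_vector_derivative_fixed_by_linear:
  assumes P: "bounded_linear P" and v: "\<And>y. (v has_vector_derivative V y) (at y)"
    and fixed: "\<And>y. P (v y) = v y"
  shows "P (V y) = V y"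
  using bounded_linear.has_vector_derivative[OF P v[of y]] v[of y]
  by (simp add: fixed vector_derivative_unique_at)

lemma memLp_Ioi_shift:
  fixes F :: "real \<Rightarrow> 'a::{banach, second_countable_topology}"
  assumes "1 \<le> p" "0 < t0" and F: "continuous_on UNIV F"
    and vanish: "\<And>y. y \<notin> {0..t0} \<Longrightarrow> F y = 0" and "t \<le> t0"
  shows "memLp p {0<..} (\<lambda>r. F (t - r))"
proof -
  have "bounded (F ` {0..t0})"
    using compact_imp_bounded[OF compact_continuous_image[OF continuous_on_subset[OF F] compact_Icc]]
    by simp
  then obtain C where C: "\<forall>x\<in>F ` {0..t0}. norm x \<le> C"
    unfolding bounded_iff by blast
  have bound: "norm (F y) \<le> max C 0" for y
    using C vanish[of y] by (cases "y \<in> {0..t0}") (auto simp: le_max_iff_disj)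
  have "continuous_on UNIV (\<lambda>r. F (t - r))"
    by (rule continuous_on_compose2[OF F]) (auto intro!: continuous_intros)
  then have "(\<lambda>r. F (t - r)) \<in> borel_measurable (lebesgue_on {0<..})"
    by (rule borel_measurable_lebesgue_on_if_continuous) simp
  moreover have "F (t - r) = 0" if "t0 < r" for r
    using that \<open>t \<le> t0\<close> vanish[of "t - r"] by simp
  ultimately show ?thesis
    using assms(1,2) bound by (intro memLp_Ioi_if_bounded[where T = t0 and C = "max C 0"]) auto
qed

lemma Lp_norm_shift_tendsto_0:
  fixes V :: "real \<Rightarrow> 'a::{banach, second_countable_topology}"
  assumes "1 \<le> p" "0 < t0" and V: "continuous_on UNIV V"
    and vanish: "\<And>y. y \<notin> {0..t0} \<Longrightarrow> V y = 0" and "t \<in> {0..t0}"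
  shows "((\<lambda>s. Lp_norm p {0<..} (\<lambda>r. V (s - r) - V (t - r))) \<longlongrightarrow> 0) (at t within {0..t0})"
proof -
  have uc: "uniformly_continuous_on UNIV V"
    using V vanish by (rule uniformly_continuous_on_if_vanishing_outside)
  have "((\<lambda>s. Lp_norm p {0<..} (\<lambda>r. V (s - r) - V (t - r)) / 1) \<longlongrightarrow> 0) (at t within {0..t0})"
  proof (rule Lp_norm_Ioi_quotient_tendsto_0[OF \<open>1 \<le> p\<close> \<open>0 < t0\<close>])
    show "continuous_on UNIV (\<lambda>r. V (s - r) - V (t - r))" for s
      by (intro continuous_intros continuous_on_compose2[OF V]) auto
    show "V (s - r) - V (t - r) = 0" if "s \<in> {0..t0}" "t0 < r" for s r
      using that \<open>t \<in> {0..t0}\<close> vanish[of "s - r"] vanish[of "t - r"] by simp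
    fix e :: real assume "0 < e"
    then obtain d where "0 < d" and d: "\<And>x x'. dist x' x < d \<Longrightarrow> dist (V x') (V x) < e"
      using uc unfolding uniformly_continuous_on_def by (metis UNIV_I)
    have "\<forall>\<^sub>F s in at t within {0..t0}. dist s t < d"
      using \<open>0 < d\<close> by (auto simp: eventually_at)
    then show "\<forall>\<^sub>F s in at t within {0..t0}. \<forall>r>0. norm (V (s - r) - V (t - r)) \<le> e * 1"
    proof (rule eventually_mono, intro allI impI)
      fix s r :: real assume "dist s t < d"
      then have "dist (s - r) (t - r) < d"
        by (simp add: dist_real_def)
      then show "norm (V (s - r) - V (t - r)) \<le> e * 1"
        using d[of "s - r" "t - r"] by (simp add: dist_norm)
    qed
  qed simp
  then show ?thesis
    by simp
qed

lemma Lp_norm_shift_difference_quotient_tendsto_0: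
  fixes v V :: "real \<Rightarrow> 'a::{banach, second_countable_topology}"
  assumes "1 \<le> p" "0 < t0" and v: "\<And>y. (v has_vector_derivative V y) (at y)"
    and V: "continuous_on UNIV V"
    and vanish: "\<And>y. y \<notin> {0..t0} \<Longrightarrow> v y = 0" and "t \<in> {0..t0}"
  shows "((\<lambda>s. Lp_norm p {0<..} (\<lambda>r. v (s - r) - v (t - r) - (s - t) *\<^sub>R V (t - r)) / \<bar>s - t\<bar>)
    \<longlongrightarrow> 0) (at t within {0..t0})"
proof (rule Lp_norm_Ioi_quotient_tendsto_0[OF \<open>1 \<le> p\<close> \<open>0 < t0\<close>])
  have V0: "V y = 0" if "y \<notin> {0..t0}" for y
    using v vanish that by (rule has_vector_derivative_eq_0_outside)
  have cv: "continuous_on UNIV v"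
    by (rule continuous_at_imp_continuous_on) (use v has_vector_derivative_continuous in blast)
  show "continuous_on UNIV (\<lambda>r. v (s - r) - v (t - r) - (s - t) *\<^sub>R V (t - r))" for s
    by (intro continuous_intros continuous_on_compose2[OF V] continuous_on_compose2[OF cv]) auto
  show "v (s - r) - v (t - r) - (s - t) *\<^sub>R V (t - r) = 0" if "s \<in> {0..t0}" "t0 < r" for s r
    using that \<open>t \<in> {0..t0}\<close> vanish[of "s - r"] vanish[of "t - r"] V0[of "t - r"] by simp
  show "0 < \<bar>s - t\<bar>" if "s \<noteq> t" for s
    using that by simp
  have uc: "uniformly_continuous_on UNIV V"
    using V V0 by (rule uniformly_continuous_on_if_vanishing_outside)
  fix e :: real assume "0 < e"
  then obtain d where "0 < d" and d: "\<And>x x'. dist x' x < d \<Longrightarrow> dist (V x') (V x) < e"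
    using uc unfolding uniformly_continuous_on_def by (metis UNIV_I)
  have "\<forall>\<^sub>F s in at t within {0..t0}. dist s t < d"
    using \<open>0 < d\<close> by (auto simp: eventually_at)
  then show "\<forall>\<^sub>F s in at t within {0..t0}.
      \<forall>r>0. norm (v (s - r) - v (t - r) - (s - t) *\<^sub>R V (t - r)) \<le> e * \<bar>s - t\<bar>"
  proof (rule eventually_mono, intro allI impI)
    fix s r :: real assume "dist s t < d"
    then have "norm (V y - V (t - r)) \<le> e" if "\<bar>y - (t - r)\<bar> \<le> \<bar>(s - r) - (t - r)\<bar>" for y
    proof -
      have "dist y (t - r) < d"
        using that \<open>dist s t < d\<close> by (simp add: dist_real_def)
      then show ?thesis
        using d[of y "t - r"] by (simp add: dist_norm)
    qed
    then have "norm (v (s - r) - v (t - r) - ((s - r) - (t - r)) *\<^sub>R V (t - r))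
        \<le> \<bar>(s - r) - (t - r)\<bar> * e"
      by (rule norm_linearization_le[OF v])
    then show "norm (v (s - r) - v (t - r) - (s - t) *\<^sub>R V (t - r)) \<le> e * \<bar>s - t\<bar>"
      by (simp add: mult.commute)
  qed
qed

lemma matrix_vector_mult_reflection:
  fixes Pp Pm :: "'a::comm_ring_1^'n^'n"
  assumes "Pp + Pm = mat 1" and "Pm *v w = w"
  shows "(Pp - Pm) *v (- w) = w"
proof -
  have "Pm *v (- w) = - w"
    using assms(2) by (simp add: matrix_vector_mult_def vec_eq_iff sum_negf)
  moreover have "Pp = mat 1 - Pm"
    using assms(1) by (simp add: eq_diff_eq)
  ultimately have "Pp *v (- w) = 0"
    by (simp add: matrix_vector_mult_diff_rdistrib)
  with \<open>Pm *v (- w) = - w\<close> show ?thesis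
    by (simp add: matrix_vector_mult_diff_rdistrib)
qed

lemma has_vector_derivative_reflected_shift:
  assumes "(v has_vector_derivative V (t - r)) (at (t - r))"
  shows "((\<lambda>r. v (t - r)) has_vector_derivative - V (t - r)) (at r)"
proof -
  have "((\<lambda>r. t - r) has_real_derivative -1) (at r)"
    by (auto intro!: derivative_eq_intros)
  then show ?thesis
    using vector_diff_chain_at[of "\<lambda>r. t - r" "-1" r v "V (t - r)"] assms
    by (simp add: o_def has_real_derivative_iff_has_vector_derivative)
qed

lemma classical_solution_of_shift:
  fixes v V u :: "real \<Rightarrow> complex^'l" and Pp Pm :: "complex^'l^'l"
  assumes p: "1 \<le> p" and "0 < t0" and PP: "Pp + Pm = mat 1"
    and v: "\<And>y. (v has_vector_derivative V y) (at y)" and V: "continuous_on UNIV V"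
    and vanish: "\<And>y. y \<notin> {0..t0} \<Longrightarrow> v y = 0"
    and range: "\<And>y. Pm *v v y = v y"
    and vu: "\<And>t. t \<in> {0..t0} \<Longrightarrow> v t = u t"
  shows "classical_solution p Pp Pm t0 u (\<lambda>t r. v (t - r))"
proof -
  have V0: "V y = 0" if "y \<notin> {0..t0}" for y
    using v vanish that by (rule has_vector_derivative_eq_0_outside)
  have cv: "continuous_on UNIV v"
    by (rule continuous_at_imp_continuous_on) (use v has_vector_derivative_continuous in blast)
  have A: "(Pp - Pm) *v (- V y) = V y" for y
    using PP has_vector_derivative_fixed_by_linear[OF matrix_vector_mul_bounded_linear v range]
    by (rule matrix_vector_mult_reflection)
  have shift: "((\<lambda>r. v (t - r)) has_vector_derivative - V (t - r)) (at r)" for t r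
    using v by (rule has_vector_derivative_reflected_shift)
  have cont_shift: "continuous_on UNIV (\<lambda>r. - V (t - r))" for t
    by (intro continuous_intros continuous_on_compose2[OF V]) auto
  show ?thesis
    unfolding classical_solution_def
  proof (rule exI[of _ "\<lambda>t r. V (t - r)"], rule exI[of _ "\<lambda>t r. - V (t - r)"], intro conjI ballI)
    fix t assume t: "t \<in> {0..t0}"
    show "memLp p {0<..} (\<lambda>r. v (t - r))" "memLp p {0<..} (\<lambda>r. V (t - r))"
      using t by (auto intro!: memLp_Ioi_shift[OF p \<open>0 < t0\<close>] cv V vanish V0)
    show "((\<lambda>s. Lp_norm p {0<..} (\<lambda>r. v (s - r) - v (t - r) - (s - t) *\<^sub>R V (t - r)) / \<bar>s - t\<bar>)
        \<longlongrightarrow> 0) (at t within {0..t0})"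
      using p \<open>0 < t0\<close> v V vanish t by (rule Lp_norm_shift_difference_quotient_tendsto_0)
    show V_lim: "((\<lambda>s. Lp_norm p {0<..} (\<lambda>r. V (s - r) - V (t - r))) \<longlongrightarrow> 0) (at t within {0..t0})"
      using p \<open>0 < t0\<close> V V0 t by (rule Lp_norm_shift_tendsto_0)
    then show "((\<lambda>s. Lp_norm p {0<..} (\<lambda>r. (Pp - Pm) *v (- V (s - r)) - (Pp - Pm) *v (- V (t - r))))
        \<longlongrightarrow> 0) (at t within {0..t0})"
      by (simp add: A)
    have "memLp p {0<..} (\<lambda>r. - V (t - r))"
      using t V V0 by (intro memLp_Ioi_shift[OF p \<open>0 < t0\<close>, of "\<lambda>y. - V y"] continuous_intros) auto
    then show "W1p p {0<..} (\<lambda>r. v (t - r)) (\<lambda>r. - V (t - r))"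
      unfolding W1p_def using t cv vanish shift cont_shift
      by (auto intro!: memLp_Ioi_shift[OF p \<open>0 < t0\<close>] weak_deriv_on_Ioi_C1)
    show "AE r in lebesgue_on {0<..}. V (t - r) = (Pp - Pm) *v - V (t - r)"
      by (simp add: A)
    have "continuous_on {0..} (\<lambda>r. v (t - r))"
      by (intro continuous_on_compose2[OF cv] continuous_intros) auto
    then have "trace0 (\<lambda>r. v (t - r)) = v t"
      by (simp add: trace0_continuous)
    then show "Pm *v trace0 (\<lambda>r. v (t - r)) = u t"
      using range[of t] vu[OF t] by simp
  next
    show "AE r in lebesgue_on {0<..}. v (0 - r) = 0"
      by (rule AE_I2) (auto simp: space_restrict_space intro: vanish)
  qed
qed

lemma continuous_AE_in_rg_imp_in_rg:
  fixes u :: "real \<Rightarrow> complex^'l"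
  assumes "0 < t0" and u: "continuous_on {0..t0} u"
    and "AE t in lebesgue_on {0<..<t0}. u t \<in> rg P" and "t \<in> {0..t0}"
  shows "u t \<in> rg P"
proof -
  have "continuous_on {0..t0} (\<lambda>t. P *v u t - u t)"
    using bounded_linear.continuous_on[OF matrix_vector_mul_bounded_linear u] u
    by (intro continuous_intros)
  moreover have "AE t in lebesgue_on {0<..<t0}. P *v u t - u t = 0"
    using assms(3) by eventually_elim (simp add: rg_def)
  ultimately have "P *v u t - u t = 0"
    by (rule continuous_on_AE_eq_0[OF \<open>0 < t0\<close> _ _ \<open>t \<in> {0..t0}\<close>])
  then show ?thesis
    by (simp add: rg_def)
qed

theorem lemma2p8:
  fixes p t0 :: real and S :: "'l::finite set" and Pp Pm :: "complex^'l^'l"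
    and u :: "real \<Rightarrow> complex^'l"
  assumes "1 \<le> p"
    and "Pm = (\<chi> i j. if i = j \<and> i \<in> S then 1 else 0)"
    and "Pp + Pm = mat 1"
    and "t0 > 0"
    and "W2p0 p {0<..<t0} (rg Pm) u"
    and "continuous_on {0..t0} u"
  shows "classical_solution p Pp Pm t0 u (\<lambda>t r. ext0 t0 u (t - r))"
proof -
  obtain u' where C1: "clamped_C1 t0 u u'"
    using W2p0_clamped_C1[OF assms(1,4,5,6)] by blast
  have range: "Pm *v u t = u t" if "t \<in> {0..t0}" for t
    using continuous_AE_in_rg_imp_in_rg[OF assms(4,6) _ that] assms(5)
    by (simp add: W2p0_def rg_def)
  show ?thesis
  proof (rule classical_solution_of_shift[OF assms(1,4,3)])
    show "(ext0 t0 u has_vector_derivative ext0 t0 u' y) (at y)" for y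
      using C1 by (rule clamped_C1_ext0)
    show "continuous_on UNIV (ext0 t0 u')"
      using C1 by (rule clamped_C1_ext0)
  qed (auto simp: ext0_def range)
qed

end
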